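(* Let $n\ge1$ and let $(\phi_1^k,\phi_2^k)\in\vec{\mathcal C}^{\mathcal G}_{\rm per}$, $k=n-1,n,n+1$, with $\overline{\phi_i^{n-1}}=\overline{\phi_i^{n}}=\overline{\phi_i^{n+1}}$ ($i=1,2$), where $(\phi_1^{n+1},\phi_2^{n+1})$ solves the BDF2 scheme at step $n+1$ with constants satisfying $A_1\ge\frac{\mathcal M_1(3\chi_{13}+3\chi_{23}+2\chi_{12})^2}{4}$ and $A_2\ge\frac{\mathcal M_2(3\chi_{13}+3\chi_{23}+2\chi_{12})^2}{4}$. Define, for $m\ge0$, $E_h^{m+1,m}=G_h(\phi_1^{m+1},\phi_2^{m+1})+\frac{\Delta t}{4\mathcal M_1}\big\|\frac{\phi_1^{m+1}-\phi_1^m}{\Delta t}\big\|_{-1,h}^2+\frac{\Delta t}{4\mathcal M_2}\big\|\frac{\phi_2^{m+1}-\phi_2^m}{\Delta t}\big\|_{-1,h}^2+\frac{2\chi_{12}+3\chi_{13}+\chi_{23}}{2}\|\phi_1^{m+1}-\phi_1^m\|_2^2+\frac{2\chi_{12}+\chi_{13}+3\chi_{23}}{2}\|\phi_2^{m+1}-\phi_2^m\|_2^2.$ Then $E_h^{n+1,n}\le E_h^{n,n-1}$.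
   Context: Discrete setting. Fix $L>0$, $N\in\mathbb N$, $h=L/N$, $\Omega=(0,L)^2$. $\mathcal C_{\rm per}$ is the space of real grid functions $\nu=(\nu_{i,j})_{i,j\in\mathbb Z}$ with $\nu_{i+aN,j+bN}=\nu_{i,j}$ for all integers $i,j,a,b$ ($\nu_{i,j}$ is the value at the cell centre $((i-\tfrac12)h,(j-\tfrac12)h)$); periodic face-centred functions are indexed by $(i+\frac12,j)$ (east-west faces) or $(i,j+\frac12)$ (north-south faces). Define $(A_x\nu)_{i+\frac12,j}=\tfrac12(\nu_{i+1,j}+\nu_{i,j})$, $(D_x\nu)_{i+\frac12,j}=\tfrac1h(\nu_{i+1,j}-\nu_{i,j})$, and for east-west face functions $f$, $(a_xf)_{i,j}=\tfrac12(f_{i+\frac12,j}+f_{i-\frac12,j})$, $(d_xf)_{i,j}=\tfrac1h(f_{i+\frac12,j}-f_{i-\frac12,j})$; $A_y,D_y,a_y,d_y$ are defined analogously in the second index. $\nabla_h\nu=(D_x\nu,D_y\nu)$, $\nabla_h\cdot(f^x,f^y)=d_xf^x+d_yf^y$, $\Delta_h\nu=d_x(D_x\nu)+d_y(D_y\nu)$ (the 5-point Laplacian). For $\nu,\xi\in\mathcal C_{\rm per}$: $\langle\nu,\xi\rangle=h^2\sum_{i,j=1}^N\nu_{i,j}\xi_{i,j}$, $\|\nu\|_2=\langle\nu,\nu\rangle^{1/2}$, $\|\nu\|_\infty=\max_{1\le i,j\le N}|\nu_{i,j}|$, $\|\nabla_h\nu\|_2^2=\langle a_x((D_x\nu)^2)+a_y((D_y\nu)^2),1\rangle$,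 $\overline{\nu}=|\Omega|^{-1}\langle\nu,1\rangle$. For $\overline\nu=0$, $(-\Delta_h)^{-1}\nu$ denotes the unique mean-zero $\psi\in\mathcal C_{\rm per}$ with $-\Delta_h\psi=\nu$; for mean-zero $\nu,\xi$, $\langle\nu,\xi\rangle_{-1,h}=\langle\nu,(-\Delta_h)^{-1}\xi\rangle$ and $\|\nu\|_{-1,h}=\langle\nu,\nu\rangle_{-1,h}^{1/2}$. Functions of grid functions (products, quotients, $\ln$) act pointwise. Model. $M_0,N_0>0$, $\alpha=\pi((M_0/\pi)^{1/2}+N_0/2)^2$, $\beta=2(M_0/\pi)^{1/2}+N_0$; $\varepsilon_1,\varepsilon_2,\varepsilon_3>0$; $\chi_{12},\chi_{13},\chi_{23}>0$ with $4\chi_{13}\chi_{23}-(\chi_{12}-\chi_{13}-\chi_{23})^2>0$; mobilities $\mathcal M_1,\mathcal M_2>0$. For $a,b>0$, $a+b<1$: $S(a,b)=\frac{a}{M_0}\ln\frac{\alpha a}{M_0}+\frac{b}{N_0}\ln\frac{\beta b}{N_0}+(1-a-b)\ln(1-a-b)$, $H(a,b)=\chi_{12}ab+\chi_{13}a(1-a-b)+\chi_{23}b(1-a-b)$; thus $\partial_aS=\frac1{M_0}\ln\frac{\alpha a}{M_0}+\frac1{M_0}-\ln(1-a-b)-1$, $\partial_bS=\frac1{N_0}\ln\frac{\beta b}{N_0}+\frac1{N_0}-\ln(1-a-b)-1$, $\partial_aH=\chi_{13}-2\chi_{13}a+(\chi_{12}-\chi_{13}-\chi_{23})b$, $\partial_bH=\chi_{23}-2\chi_{23}b+(\chi_{12}-\chi_{13}-\chi_{23})a$.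 $\kappa(s)=1/(36s)$. The Gibbs triangle is $\mathcal G=\{(a,b):a>0,b>0,a+b<1\}$, and $\vec{\mathcal C}^{\mathcal G}_{\rm per}$ is the set of pairs $(\phi_1,\phi_2)\in\mathcal C_{\rm per}^2$ with $((\phi_1)_{i,j},(\phi_2)_{i,j})\in\mathcal G$ for all $i,j$. For such a pair set $u_1=\phi_1$, $u_2=\phi_2$, $u_3=1-\phi_1-\phi_2$ and, for $k=1,2,3$, $T_k(\phi_1,\phi_2)=a_x(\kappa'(A_xu_k)(D_xu_k)^2)-2d_x(\kappa(A_xu_k)D_xu_k)+a_y(\kappa'(A_yu_k)(D_yu_k)^2)-2d_y(\kappa(A_yu_k)D_yu_k)$. Discrete energy: $G_h(\phi_1,\phi_2)=\langle S(\phi_1,\phi_2)+H(\phi_1,\phi_2),1\rangle+\sum_{k=1}^3\varepsilon_k^2\langle a_x(\kappa(A_xu_k)(D_xu_k)^2)+a_y(\kappa(A_yu_k)(D_yu_k)^2),1\rangle$. Convex-part derivatives: $\delta_{\phi_1}G_{h,c}(\phi_1,\phi_2)=\partial_aS(\phi_1,\phi_2)+\varepsilon_1^2T_1-\varepsilon_3^2T_3$, $\delta_{\phi_2}G_{h,c}(\phi_1,\phi_2)=\partial_bS(\phi_1,\phi_2)+\varepsilon_2^2T_2-\varepsilon_3^2T_3$. BDF2 scheme. Fix $\Delta t>0$ and constants $A_1,A_2\ge0$. For $n\ge1$, given $(\phi_1^{k},\phi_2^{k})$, $k=n-1,n$, set $\hat\phi_i^n=2\phi_i^n-\phi_i^{n-1}$.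 A pair $(\phi_1^{n+1},\phi_2^{n+1})\in\vec{\mathcal C}^{\mathcal G}_{\rm per}$ solves the scheme at step $n+1$ if for $i=1,2$: $\frac{3\phi_i^{n+1}-4\phi_i^n+\phi_i^{n-1}}{2\Delta t}=\mathcal M_i\Delta_h\mu_i^{n+1}$, where $\mu_1^{n+1}=\delta_{\phi_1}G_{h,c}(\phi_1^{n+1},\phi_2^{n+1})+\partial_aH(\hat\phi_1^n,\hat\phi_2^n)-A_1\Delta t\,\Delta_h(\phi_1^{n+1}-\phi_1^n)$ and $\mu_2^{n+1}=\delta_{\phi_2}G_{h,c}(\phi_1^{n+1},\phi_2^{n+1})+\partial_bH(\hat\phi_1^n,\hat\phi_2^n)-A_2\Delta t\,\Delta_h(\phi_2^{n+1}-\phi_2^n)$. *)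

theory Defs
  imports Complex_Main
begin

text \<open>Cell-centred grid functions on Z^2. An east-west face function f is stored so that
  f i j is the value at the face (i+1/2, j); a north-south face function g is stored so that
  g i j is the value at (i, j+1/2).\<close>

type_synonym grid = "int \<Rightarrow> int \<Rightarrow> real"

definition periodic :: "nat \<Rightarrow> grid \<Rightarrow> bool" where
  "periodic N \<nu> \<longleftrightarrow> (\<forall>i j a b. \<nu> (i + a * int N) (j + b * int N) = \<nu> i j)"

definition Ax :: "grid \<Rightarrow> grid" where "Ax \<nu> = (\<lambda>i j. (\<nu> (i+1) j + \<nu> i j) / 2)"
definition Ay :: "grid \<Rightarrow> grid" where "Ay \<nu> = (\<lambda>i j. (\<nu> i (j+1) + \<nu> i j) / 2)"
definition Dx :: "real \<Rightarrow> grid \<Rightarrow> grid" where "Dx h \<nu> = (\<lambda>i j. (\<nu> (i+1) j - \<nu> i j) / h)"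
definition Dy :: "real \<Rightarrow> grid \<Rightarrow> grid" where "Dy h \<nu> = (\<lambda>i j. (\<nu> i (j+1) - \<nu> i j) / h)"
definition ax :: "grid \<Rightarrow> grid" where "ax f = (\<lambda>i j. (f i j + f (i-1) j) / 2)"
definition ay :: "grid \<Rightarrow> grid" where "ay f = (\<lambda>i j. (f i j + f i (j-1)) / 2)"
definition dx :: "real \<Rightarrow> grid \<Rightarrow> grid" where "dx h f = (\<lambda>i j. (f i j - f (i-1) j) / h)"
definition dy :: "real \<Rightarrow> grid \<Rightarrow> grid" where "dy h f = (\<lambda>i j. (f i j - f i (j-1)) / h)"

definition lap :: "real \<Rightarrow> grid \<Rightarrow> grid" where
  "lap h \<nu> = (\<lambda>i j. dx h (Dx h \<nu>) i j + dy h (Dy h \<nu>) i j)"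

definition gip :: "real \<Rightarrow> nat \<Rightarrow> grid \<Rightarrow> grid \<Rightarrow> real" where
  "gip L N \<nu> \<xi> = (L / real N)^2 * (\<Sum>i\<in>{1..int N}. \<Sum>j\<in>{1..int N}. \<nu> i j * \<xi> i j)"

definition gnorm2 :: "real \<Rightarrow> nat \<Rightarrow> grid \<Rightarrow> real" where
  "gnorm2 L N \<nu> = sqrt (gip L N \<nu> \<nu>)"

definition gmean :: "real \<Rightarrow> nat \<Rightarrow> grid \<Rightarrow> real" where
  "gmean L N \<nu> = gip L N \<nu> (\<lambda>_ _. 1) / L^2"

definition invlap :: "real \<Rightarrow> nat \<Rightarrow> grid \<Rightarrow> grid" where
  "invlap L N \<nu> = (THE \<psi>. periodic N \<psi> \<and> gmean L N \<psi> = 0 \<and>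
                       (\<forall>i j. - lap (L / real N) \<psi> i j = \<nu> i j))"

definition hm1_ip :: "real \<Rightarrow> nat \<Rightarrow> grid \<Rightarrow> grid \<Rightarrow> real" where
  "hm1_ip L N \<nu> \<xi> = gip L N \<nu> (invlap L N \<xi>)"

definition hm1_norm :: "real \<Rightarrow> nat \<Rightarrow> grid \<Rightarrow> real" where
  "hm1_norm L N \<nu> = sqrt (hm1_ip L N \<nu> \<nu>)"

definition alphaC :: "real \<Rightarrow> real \<Rightarrow> real" where
  "alphaC M0 N0 = pi * (sqrt (M0 / pi) + N0 / 2)^2"
definition betaC :: "real \<Rightarrow> real \<Rightarrow> real" where
  "betaC M0 N0 = 2 * sqrt (M0 / pi) + N0"

definition Sfun :: "real \<Rightarrow> real \<Rightarrow> real \<Rightarrow> real \<Rightarrow> real" where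
  "Sfun M0 N0 a b = a / M0 * ln (alphaC M0 N0 * a / M0) + b / N0 * ln (betaC M0 N0 * b / N0)
                    + (1 - a - b) * ln (1 - a - b)"

definition Hfun :: "real \<Rightarrow> real \<Rightarrow> real \<Rightarrow> real \<Rightarrow> real \<Rightarrow> real" where
  "Hfun c12 c13 c23 a b = c12 * a * b + c13 * a * (1 - a - b) + c23 * b * (1 - a - b)"

definition dSa :: "real \<Rightarrow> real \<Rightarrow> real \<Rightarrow> real \<Rightarrow> real" where
  "dSa M0 N0 a b = 1 / M0 * ln (alphaC M0 N0 * a / M0) + 1 / M0 - ln (1 - a - b) - 1"
definition dSb :: "real \<Rightarrow> real \<Rightarrow> real \<Rightarrow> real \<Rightarrow> real" where
  "dSb M0 N0 a b = 1 / N0 * ln (betaC M0 N0 * b / N0) + 1 / N0 - ln (1 - a - b) - 1"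
definition dHa :: "real \<Rightarrow> real \<Rightarrow> real \<Rightarrow> real \<Rightarrow> real \<Rightarrow> real" where
  "dHa c12 c13 c23 a b = c13 - 2 * c13 * a + (c12 - c13 - c23) * b"
definition dHb :: "real \<Rightarrow> real \<Rightarrow> real \<Rightarrow> real \<Rightarrow> real \<Rightarrow> real" where
  "dHb c12 c13 c23 a b = c23 - 2 * c23 * b + (c12 - c13 - c23) * a"

definition kappa :: "real \<Rightarrow> real" where "kappa s = 1 / (36 * s)"
definition kappa' :: "real \<Rightarrow> real" where "kappa' s = - 1 / (36 * s^2)"

definition gibbs :: "nat \<Rightarrow> grid \<Rightarrow> grid \<Rightarrow> bool" where
  "gibbs N \<phi>1 \<phi>2 \<longleftrightarrow> periodic N \<phi>1 \<and> periodic N \<phi>2 \<and>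
     (\<forall>i j. 0 < \<phi>1 i j \<and> 0 < \<phi>2 i j \<and> \<phi>1 i j + \<phi>2 i j < 1)"

definition u3 :: "grid \<Rightarrow> grid \<Rightarrow> grid" where "u3 \<phi>1 \<phi>2 = (\<lambda>i j. 1 - \<phi>1 i j - \<phi>2 i j)"

definition Tk :: "real \<Rightarrow> grid \<Rightarrow> grid" where
  "Tk h u = (\<lambda>i j.
      ax (\<lambda>i j. kappa' (Ax u i j) * (Dx h u i j)^2) i j
    - 2 * dx h (\<lambda>i j. kappa (Ax u i j) * Dx h u i j) i j
    + ay (\<lambda>i j. kappa' (Ay u i j) * (Dy h u i j)^2) i j
    - 2 * dy h (\<lambda>i j. kappa (Ay u i j) * Dy h u i j) i j)"

definition grad_term :: "real \<Rightarrow> nat \<Rightarrow> grid \<Rightarrow> real" where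
  "grad_term L N u = gip L N
     (\<lambda>i j. ax (\<lambda>i j. kappa (Ax u i j) * (Dx (L / real N) u i j)^2) i j
          + ay (\<lambda>i j. kappa (Ay u i j) * (Dy (L / real N) u i j)^2) i j) (\<lambda>_ _. 1)"

definition Gh :: "real \<Rightarrow> nat \<Rightarrow> real \<Rightarrow> real \<Rightarrow> real \<Rightarrow> real \<Rightarrow> real \<Rightarrow> real \<Rightarrow> real \<Rightarrow> real
                  \<Rightarrow> grid \<Rightarrow> grid \<Rightarrow> real" where
  "Gh L N M0 N0 e1 e2 e3 c12 c13 c23 \<phi>1 \<phi>2 =
     gip L N (\<lambda>i j. Sfun M0 N0 (\<phi>1 i j) (\<phi>2 i j) + Hfun c12 c13 c23 (\<phi>1 i j) (\<phi>2 i j)) (\<lambda>_ _. 1)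
     + e1^2 * grad_term L N \<phi>1 + e2^2 * grad_term L N \<phi>2 + e3^2 * grad_term L N (u3 \<phi>1 \<phi>2)"

definition dGc1 :: "real \<Rightarrow> nat \<Rightarrow> real \<Rightarrow> real \<Rightarrow> real \<Rightarrow> real \<Rightarrow> grid \<Rightarrow> grid \<Rightarrow> grid" where
  "dGc1 L N M0 N0 e1 e3 \<phi>1 \<phi>2 = (\<lambda>i j. dSa M0 N0 (\<phi>1 i j) (\<phi>2 i j)
      + e1^2 * Tk (L / real N) \<phi>1 i j - e3^2 * Tk (L / real N) (u3 \<phi>1 \<phi>2) i j)"

definition dGc2 :: "real \<Rightarrow> nat \<Rightarrow> real \<Rightarrow> real \<Rightarrow> real \<Rightarrow> real \<Rightarrow> grid \<Rightarrow> grid \<Rightarrow> grid" where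
  "dGc2 L N M0 N0 e2 e3 \<phi>1 \<phi>2 = (\<lambda>i j. dSb M0 N0 (\<phi>1 i j) (\<phi>2 i j)
      + e2^2 * Tk (L / real N) \<phi>2 i j - e3^2 * Tk (L / real N) (u3 \<phi>1 \<phi>2) i j)"

text \<open>The BDF2 scheme at step n+1, for given old data (p1o,p2o) = step n-1,
  (p1,p2) = step n and new data (p1n,p2n) = step n+1.\<close>
definition bdf2_step ::
  "real \<Rightarrow> nat \<Rightarrow> real \<Rightarrow> real \<Rightarrow> real \<Rightarrow> real \<Rightarrow> real \<Rightarrow> real \<Rightarrow> real \<Rightarrow> real \<Rightarrow> real \<Rightarrow> real
   \<Rightarrow> real \<Rightarrow> real \<Rightarrow> real
   \<Rightarrow> grid \<Rightarrow> grid \<Rightarrow> grid \<Rightarrow> grid \<Rightarrow> grid \<Rightarrow> grid \<Rightarrow> bool" where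
  "bdf2_step L N M0 N0 e1 e2 e3 c12 c13 c23 Mob1 Mob2 dt A1 A2 p1o p1 p1n p2o p2 p2n \<longleftrightarrow>
     gibbs N p1n p2n \<and>
     (let h = L / real N;
          hat1 = (\<lambda>i j. 2 * p1 i j - p1o i j);
          hat2 = (\<lambda>i j. 2 * p2 i j - p2o i j);
          mu1 = (\<lambda>i j. dGc1 L N M0 N0 e1 e3 p1n p2n i j + dHa c12 c13 c23 (hat1 i j) (hat2 i j)
                       - A1 * dt * lap h (\<lambda>i j. p1n i j - p1 i j) i j);
          mu2 = (\<lambda>i j. dGc2 L N M0 N0 e2 e3 p1n p2n i j + dHb c12 c13 c23 (hat1 i j) (hat2 i j)
                       - A2 * dt * lap h (\<lambda>i j. p2n i j - p2 i j) i j)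
      in (\<forall>i j. (3 * p1n i j - 4 * p1 i j + p1o i j) / (2 * dt) = Mob1 * lap h mu1 i j) \<and>
         (\<forall>i j. (3 * p2n i j - 4 * p2 i j + p2o i j) / (2 * dt) = Mob2 * lap h mu2 i j))"

text \<open>The modified energy E_h^{m+1,m}, with (p1n,p2n) = step m+1 and (p1,p2) = step m.\<close>
definition Eh ::
  "real \<Rightarrow> nat \<Rightarrow> real \<Rightarrow> real \<Rightarrow> real \<Rightarrow> real \<Rightarrow> real \<Rightarrow> real \<Rightarrow> real \<Rightarrow> real \<Rightarrow> real \<Rightarrow> real
   \<Rightarrow> real \<Rightarrow> grid \<Rightarrow> grid \<Rightarrow> grid \<Rightarrow> grid \<Rightarrow> real" where
  "Eh L N M0 N0 e1 e2 e3 c12 c13 c23 Mob1 Mob2 dt p1 p1n p2 p2n =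
     Gh L N M0 N0 e1 e2 e3 c12 c13 c23 p1n p2n
     + dt / (4 * Mob1) * (hm1_norm L N (\<lambda>i j. (p1n i j - p1 i j) / dt))^2
     + dt / (4 * Mob2) * (hm1_norm L N (\<lambda>i j. (p2n i j - p2 i j) / dt))^2
     + (2 * c12 + 3 * c13 + c23) / 2 * (gnorm2 L N (\<lambda>i j. p1n i j - p1 i j))^2
     + (2 * c12 + c13 + 3 * c23) / 2 * (gnorm2 L N (\<lambda>i j. p2n i j - p2 i j))^2"

end

(* Proof idea: convex-concave splitting tested in H^-1.  With psi_i = phi_i^(n+1) - phi_i^n and
   chi_i = phi_i^n - phi_i^(n-1), both of mean zero, test the i-th equation with (-Delta_h)^-1 psi_i.
   Since 3 phi^(n+1) - 4 phi^n + phi^(n-1) = 3 psi - chi, this expresses <mu_i, psi_i> through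
   ||psi_i||_-1^2 and <chi_i, psi_i>_-1, and Cauchy-Schwarz in the H^-1 inner product moves the
   history part into the modified energy.  Convexity of G_h,c bounds its increment by
   <delta G_h,c(new), psi>; for the quadratic concave part H the second-order extrapolation leaves a
   remainder of at most C ||psi||^2 + K (||chi||^2 - ||psi||^2), with C = 3 chi13 + 3 chi23 + 2 chi12,
   and the stabilisation A dt ||grad psi||^2 absorbs C ||psi||^2 by Young's inequality as soon as
   A >= M C^2 / 4. *)

theory Submission
  imports Defs "Jordan_Normal_Form.Determinant"
begin

section \<open>Periodic grid functions\<close>

lemma periodicD: "periodic N f \<Longrightarrow> f (i + a * int N) (j + b * int N) = f i j"
  unfolding periodic_def by blast

lemma periodicI:
  assumes x: "\<And>i j. f (i + int N) j = f i j" and y: "\<And>i j. f i (j + int N) = f i j"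
  shows "periodic N f"
proof -
  have X: "f (i + a * int N) j = f i j" for i j a
  proof (induction a arbitrary: i rule: int_induct[where k=0])
    case (step1 a) then show ?case using x[of "i + a * int N" j] by (simp add: algebra_simps)
  next
    case (step2 a) then show ?case using x[of "i + (a - 1) * int N" j] by (simp add: algebra_simps)
  qed simp
  have Y: "f i (j + b * int N) = f i j" for i j b
  proof (induction b arbitrary: j rule: int_induct[where k=0])
    case (step1 b) then show ?case using y[of i "j + b * int N"] by (simp add: algebra_simps)
  next
    case (step2 b) then show ?case using y[of i "j + (b - 1) * int N"] by (simp add: algebra_simps)
  qed simp
  show ?thesis unfolding periodic_def using X Y by simp
qed

lemma periodic_shifts:
  assumes "periodic N f"
  shows "f (i + int N) j = f i j" "f i (j + int N) = f i j"
    and "f (i + int N + c) j = f (i + c) j" "f (i + int N - c) j = f (i - c) j"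
    and "f i (j + int N + c) = f i (j + c)" "f i (j + int N - c) = f i (j - c)"
proof -
  have x: "f (k + int N) l = f k l" and y: "f k (l + int N) = f k l" for k l
    using periodicD[OF assms, of k 1 l 0] periodicD[OF assms, of k 0 l 1] by simp_all
  show "f (i + int N) j = f i j" "f i (j + int N) = f i j" by (fact x y)+
  show "f (i + int N + c) j = f (i + c) j" "f (i + int N - c) j = f (i - c) j"
    using x[of "i + c" j] x[of "i - c" j] by (simp_all add: algebra_simps)
  show "f i (j + int N + c) = f i (j + c)" "f i (j + int N - c) = f i (j - c)"
    using y[of i "j + c"] y[of i "j - c"] by (simp_all add: algebra_simps)
qed

lemma periodic_pointwise:
  "periodic N f \<Longrightarrow> periodic N (\<lambda>i j. F (f i j))"
  by (rule periodicI) (simp_all add: periodic_shifts)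

lemma periodic_pointwise2:
  "periodic N f \<Longrightarrow> periodic N g \<Longrightarrow> periodic N (\<lambda>i j. F (f i j) (g i j))"
  by (rule periodicI) (simp_all add: periodic_shifts)

lemma periodic_const: "periodic N (\<lambda>i j. c)"
  by (rule periodicI) simp_all

lemma periodic_arith:
  assumes "periodic N f" "periodic N g"
  shows periodic_add: "periodic N (\<lambda>i j. f i j + g i j)"
    and periodic_diff: "periodic N (\<lambda>i j. f i j - g i j)"
    and periodic_mult: "periodic N (\<lambda>i j. f i j * g i j)"
  using periodic_pointwise2[OF assms, of "(+)"] periodic_pointwise2[OF assms, of "(-)"]
    periodic_pointwise2[OF assms, of "(*)"] by simp_all

lemma periodic_difference_ops:
  assumes "periodic N u"
  shows periodic_Ax: "periodic N (Ax u)" and periodic_Ay: "periodic N (Ay u)"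
    and periodic_Dx: "periodic N (Dx h u)" and periodic_Dy: "periodic N (Dy h u)"
    and periodic_ax: "periodic N (ax u)" and periodic_ay: "periodic N (ay u)"
    and periodic_dx: "periodic N (dx h u)" and periodic_dy: "periodic N (dy h u)"
  using assms
  by (auto intro!: periodicI simp: Ax_def Ay_def Dx_def Dy_def ax_def ay_def dx_def dy_def periodic_shifts)

lemma periodic_lap: "periodic N u \<Longrightarrow> periodic N (lap h u)"
  unfolding lap_def by (intro periodic_add periodic_dx periodic_dy periodic_Dx periodic_Dy)

lemma periodic_Tk:
  assumes u: "periodic N u"
  shows "periodic N (Tk h u)"
proof -
  have "periodic N (\<lambda>i j. F (Ax u i j) (Dx h u i j))" "periodic N (\<lambda>i j. F (Ay u i j) (Dy h u i j))" for F
    using periodic_pointwise2[OF periodic_Ax[OF u] periodic_Dx[OF u]]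
      periodic_pointwise2[OF periodic_Ay[OF u] periodic_Dy[OF u]] by blast+
  then show ?thesis
    unfolding Tk_def by (intro periodic_add periodic_diff periodic_mult periodic_const periodic_difference_ops u)
qed

section \<open>Cell sums and summation by parts\<close>

definition cell_sum :: "nat \<Rightarrow> grid \<Rightarrow> real" where
  "cell_sum N f = (\<Sum>i\<in>{1..int N}. \<Sum>j\<in>{1..int N}. f i j)"

lemma cell_sum_linear:
  shows cell_sum_add: "cell_sum N (\<lambda>i j. f i j + g i j) = cell_sum N f + cell_sum N g"
    and cell_sum_diff: "cell_sum N (\<lambda>i j. f i j - g i j) = cell_sum N f - cell_sum N g"
    and cell_sum_cmult: "cell_sum N (\<lambda>i j. c * f i j) = c * cell_sum N f"
    and cell_sum_divide: "cell_sum N (\<lambda>i j. f i j / c) = cell_sum N f / c"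
    and cell_sum_uminus: "cell_sum N (\<lambda>i j. - f i j) = - cell_sum N f"
  unfolding cell_sum_def
  by (simp_all add: sum.distrib sum_subtractf sum_distrib_left sum_divide_distrib sum_negf)

lemma cell_sum_const: "cell_sum N (\<lambda>i j. c) = real N ^ 2 * c"
  unfolding cell_sum_def by (simp add: power2_eq_square)

lemma cell_sum_mono:
  "(\<And>i j. f i j \<le> g i j) \<Longrightarrow> cell_sum N f \<le> cell_sum N g"
  unfolding cell_sum_def by (intro sum_mono) auto

lemma cell_sum_nonneg: "(\<And>i j. 0 \<le> f i j) \<Longrightarrow> 0 \<le> cell_sum N f"
  using cell_sum_mono[of "\<lambda>i j. 0" f N] by (simp add: cell_sum_const)

lemma gip_eq_cell_sum: "gip L N f g = (L / real N)^2 * cell_sum N (\<lambda>i j. f i j * g i j)"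
  unfolding gip_def cell_sum_def ..

lemma gmean_eq_cell_sum: "L > 0 \<Longrightarrow> N \<ge> 1 \<Longrightarrow> gmean L N f = cell_sum N f / real N ^ 2"
  unfolding gmean_def gip_eq_cell_sum by (simp add: power_divide)

lemma gnorm2_sq: "(gnorm2 L N f)^2 = (L / real N)^2 * cell_sum N (\<lambda>i j. f i j * f i j)"
  using cell_sum_nonneg[of "\<lambda>i j. f i j * f i j" N]
  unfolding gnorm2_def gip_eq_cell_sum by simp

lemma cell_sum_shift:
  assumes "periodic N f"
  shows cell_sum_shift_x: "cell_sum N (\<lambda>i j. f (i - 1) j) = cell_sum N f"
    and cell_sum_shift_y: "cell_sum N (\<lambda>i j. f i (j - 1)) = cell_sum N f"
proof -
  have shift: "(\<Sum>i\<in>{1..int N}. g (i - 1)) = (\<Sum>i\<in>{1..int N}. g i)" if "g 0 = g (int N)" for g :: "int \<Rightarrow> real"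
  proof -
    have "(\<Sum>i\<in>{1..int N}. g (i - 1)) = (\<Sum>i\<in>{0..int N - 1}. g i)"
      by (rule sum.reindex_bij_witness[of _ "\<lambda>i. i + 1" "\<lambda>i. i - 1"]) auto
    also have "\<dots> = (\<Sum>i\<in>{1..int N}. g i)"
    proof (cases "N = 0")
      case False
      then have "{0..int N - 1} = insert 0 {1..int N - 1}" "{1..int N} = insert (int N) {1..int N - 1}"
        by auto
      then show ?thesis using that by simp
    qed simp
    finally show ?thesis .
  qed
  show "cell_sum N (\<lambda>i j. f (i - 1) j) = cell_sum N f"
    unfolding cell_sum_def by (rule shift) (simp add: periodic_shifts(1)[OF assms, of 0, simplified])
  show "cell_sum N (\<lambda>i j. f i (j - 1)) = cell_sum N f"
    unfolding cell_sum_def by (intro sum.cong refl shift) (simp add: periodic_shifts(2)[OF assms, of _ 0, simplified])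
qed

lemma cell_sum_by_parts:
  assumes f: "periodic N f" and w: "periodic N w"
  shows cell_sum_ax_mult: "cell_sum N (\<lambda>i j. ax f i j * w i j) = cell_sum N (\<lambda>i j. f i j * Ax w i j)"
    and cell_sum_ay_mult: "cell_sum N (\<lambda>i j. ay f i j * w i j) = cell_sum N (\<lambda>i j. f i j * Ay w i j)"
    and cell_sum_dx_mult: "cell_sum N (\<lambda>i j. dx h f i j * w i j) = - cell_sum N (\<lambda>i j. f i j * Dx h w i j)"
    and cell_sum_dy_mult: "cell_sum N (\<lambda>i j. dy h f i j * w i j) = - cell_sum N (\<lambda>i j. f i j * Dy h w i j)"
proof -
  have px: "periodic N (\<lambda>i j. f i j * w (i + 1) j)" and py: "periodic N (\<lambda>i j. f i j * w i (j + 1))"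
    using f w by (auto intro!: periodicI simp: periodic_shifts)
  have sx: "cell_sum N (\<lambda>i j. f (i - 1) j * w i j) = cell_sum N (\<lambda>i j. f i j * w (i + 1) j)"
    using cell_sum_shift_x[OF px] by simp
  have sy: "cell_sum N (\<lambda>i j. f i (j - 1) * w i j) = cell_sum N (\<lambda>i j. f i j * w i (j + 1))"
    using cell_sum_shift_y[OF py] by simp
  show "cell_sum N (\<lambda>i j. ax f i j * w i j) = cell_sum N (\<lambda>i j. f i j * Ax w i j)"
    using sx by (simp add: ax_def Ax_def algebra_simps add_divide_distrib cell_sum_add cell_sum_divide)
  show "cell_sum N (\<lambda>i j. ay f i j * w i j) = cell_sum N (\<lambda>i j. f i j * Ay w i j)"
    using sy by (simp add: ay_def Ay_def algebra_simps add_divide_distrib cell_sum_add cell_sum_divide)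
  show "cell_sum N (\<lambda>i j. dx h f i j * w i j) = - cell_sum N (\<lambda>i j. f i j * Dx h w i j)"
    using sx by (simp add: dx_def Dx_def algebra_simps diff_divide_distrib cell_sum_diff cell_sum_divide)
  show "cell_sum N (\<lambda>i j. dy h f i j * w i j) = - cell_sum N (\<lambda>i j. f i j * Dy h w i j)"
    using sy by (simp add: dy_def Dy_def algebra_simps diff_divide_distrib cell_sum_diff cell_sum_divide)
qed

definition dirichlet_form :: "nat \<Rightarrow> real \<Rightarrow> grid \<Rightarrow> grid \<Rightarrow> real" where
  "dirichlet_form N h f g = cell_sum N (\<lambda>i j. Dx h f i j * Dx h g i j + Dy h f i j * Dy h g i j)"

lemma dirichlet_form_sym: "dirichlet_form N h f g = dirichlet_form N h g f"
  unfolding dirichlet_form_def by (simp add: mult.commute)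

lemma dirichlet_form_nonneg: "0 \<le> dirichlet_form N h f f"
  unfolding dirichlet_form_def by (rule cell_sum_nonneg) simp

lemma dirichlet_form_young:
  "2 * a * b * dirichlet_form N h f g \<le> a^2 * dirichlet_form N h f f + b^2 * dirichlet_form N h g g"
proof -
  have "2 * a * b * (Dx h f i j * Dx h g i j + Dy h f i j * Dy h g i j)
      \<le> a^2 * (Dx h f i j * Dx h f i j + Dy h f i j * Dy h f i j) + b^2 * (Dx h g i j * Dx h g i j + Dy h g i j * Dy h g i j)"
    for i j
  proof -
    have "0 \<le> (a * Dx h f i j - b * Dx h g i j)^2 + (a * Dy h f i j - b * Dy h g i j)^2" by simp
    then show ?thesis by (simp add: power2_eq_square algebra_simps)
  qed
  then show ?thesis
    unfolding dirichlet_form_def cell_sum_cmult[symmetric] cell_sum_add[symmetric] by (rule cell_sum_mono)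
qed

lemma cell_sum_lap_mult:
  assumes "periodic N f" "periodic N g"
  shows "cell_sum N (\<lambda>i j. lap h f i j * g i j) = - dirichlet_form N h f g"
  using cell_sum_dx_mult[OF periodic_Dx[OF assms(1)] assms(2)] cell_sum_dy_mult[OF periodic_Dy[OF assms(1)] assms(2)]
  unfolding lap_def dirichlet_form_def by (simp add: distrib_right cell_sum_add)

lemma cell_sum_lap: "periodic N g \<Longrightarrow> cell_sum N (lap h g) = 0"
  using cell_sum_lap_mult[of N g "\<lambda>i j. 1" h] by (simp add: periodic_const dirichlet_form_def Dx_def Dy_def cell_sum_const)

section \<open>The periodic discrete Poisson problem\<close>

lemma periodic_cell_representative:
  assumes "periodic N f"
  shows "f i j = f ((i - 1) mod int N + 1) ((j - 1) mod int N + 1)"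
proof -
  have "(k - 1) mod int N + 1 + ((k - 1) div int N) * int N = k" for k
    using div_mult_mod_eq[of "k - 1" "int N"] by (simp add: algebra_simps)
  then show ?thesis
    using periodicD[OF assms, of "(i - 1) mod int N + 1" "(i - 1) div int N" "(j - 1) mod int N + 1" "(j - 1) div int N"]
    by simp
qed

lemma periodic_eq_zeroI:
  assumes "periodic N f" "N \<ge> 1"
    and "\<And>i j. 1 \<le> i \<Longrightarrow> i \<le> int N \<Longrightarrow> 1 \<le> j \<Longrightarrow> j \<le> int N \<Longrightarrow> f i j = 0"
  shows "f i j = 0"
proof -
  have "1 \<le> (k - 1) mod int N + 1" "(k - 1) mod int N + 1 \<le> int N" for k
    using assms(2) by (simp_all add: add1_zle_eq)
  then have "f ((i - 1) mod int N + 1) ((j - 1) mod int N + 1) = 0"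
    by (intro assms(3))
  then show ?thesis
    using periodic_cell_representative[OF assms(1), of i j] by simp
qed

lemma cell_sum_eq_zero_iff:
  assumes "\<And>i j. 0 \<le> f i j"
  shows "cell_sum N f = 0 \<longleftrightarrow> (\<forall>i \<in> {1..int N}. \<forall>j \<in> {1..int N}. f i j = 0)"
  unfolding cell_sum_def using assms by (simp add: sum_nonneg sum_nonneg_eq_0_iff)

lemma lap_eq_zero_imp_const:
  assumes g: "periodic N g" and N: "N \<ge> 1" and h: "h \<noteq> 0" and lap: "\<And>i j. lap h g i j = 0"
  shows "g i j = g 0 0"
proof -
  have "dirichlet_form N h g g = 0"
    using cell_sum_lap_mult[OF g g, of h] lap by (simp add: cell_sum_def)
  then have cell: "Dx h g i j = 0 \<and> Dy h g i j = 0"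
    if "1 \<le> i" "i \<le> int N" "1 \<le> j" "j \<le> int N" for i j
    using that unfolding dirichlet_form_def
    by (subst (asm) cell_sum_eq_zero_iff) (auto simp: add_nonneg_eq_0_iff)
  have "Dx h g i j = 0" for i j
    by (rule periodic_eq_zeroI[OF periodic_Dx[OF g] N]) (use cell in blast)
  moreover have "Dy h g i j = 0" for i j
    by (rule periodic_eq_zeroI[OF periodic_Dy[OF g] N]) (use cell in blast)
  ultimately have sx: "g (i + 1) j = g i j" and sy: "g i (j + 1) = g i j" for i j
    using h by (simp_all add: Dx_def Dy_def)
  have "g i j = g 0 j" for i j
  proof (induction i rule: int_induct[where k=0])
    case (step1 i) then show ?case using sx[of i j] by simp
  next
    case (step2 i) then show ?case using sx[of "i - 1" j] by simp
  qed simp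
  moreover have "g 0 j = g 0 0" for j
  proof (induction j rule: int_induct[where k=0])
    case (step1 j) then show ?case using sy[of 0 j] by simp
  next
    case (step2 j) then show ?case using sy[of 0 "j - 1"] by simp
  qed simp
  ultimately show ?thesis by (rule trans)
qed

lemma lap_eq: "lap h f i j = (f (i + 1) j + f (i - 1) j + f i (j + 1) + f i (j - 1) - 4 * f i j) / h^2"
  by (simp add: lap_def dx_def Dx_def dy_def Dy_def power2_eq_square diff_divide_distrib add_divide_distrib)

lemma lap_linear:
  shows lap_add: "lap h (\<lambda>i j. f i j + g i j) i j = lap h f i j + lap h g i j"
    and lap_diff: "lap h (\<lambda>i j. f i j - g i j) i j = lap h f i j - lap h g i j"
    and lap_cmult: "lap h (\<lambda>i j. c * f i j) i j = c * lap h f i j"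
    and lap_divide: "lap h (\<lambda>i j. f i j / c) i j = lap h f i j / c"
proof -
  show "lap h (\<lambda>i j. f i j + g i j) i j = lap h f i j + lap h g i j"
    unfolding lap_eq add_divide_distrib[symmetric] by (simp add: algebra_simps)
  show "lap h (\<lambda>i j. f i j - g i j) i j = lap h f i j - lap h g i j"
    unfolding lap_eq diff_divide_distrib[symmetric] by (simp add: algebra_simps)
  show cmult: "lap h (\<lambda>i j. c * f i j) i j = c * lap h f i j" for c
    unfolding lap_eq by (simp add: algebra_simps)
  show "lap h (\<lambda>i j. f i j / c) i j = lap h f i j / c"
    using cmult[of "1 / c"] by simp
qed

text \<open>Adding the cell sum makes \<open>-\<Delta>\<^sub>h\<close> injective on periodic grid functions; its matrix on the
  \<open>N\<^sup>2\<close> cell values is therefore invertible, which yields solutions of the periodic Poisson problem.\<close>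

definition neg_lap_plus_sum :: "nat \<Rightarrow> real \<Rightarrow> grid \<Rightarrow> grid" where
  "neg_lap_plus_sum N h g = (\<lambda>i j. - lap h g i j + cell_sum N g)"

lemma neg_lap_plus_sum_lincomb:
  assumes "finite F"
  shows "neg_lap_plus_sum N h (\<lambda>i j. \<Sum>l\<in>F. c l * e l i j) i j = (\<Sum>l\<in>F. c l * neg_lap_plus_sum N h (e l) i j)"
  using assms
proof (induction F rule: finite_induct)
  case empty
  then show ?case by (simp add: neg_lap_plus_sum_def lap_def dx_def Dx_def dy_def Dy_def cell_sum_def)
next
  case (insert x F)
  then show ?case
    by (simp add: neg_lap_plus_sum_def lap_add lap_cmult cell_sum_add cell_sum_cmult algebra_simps)
qed

lemma periodic_neg_lap_plus_sum: "periodic N g \<Longrightarrow> periodic N (neg_lap_plus_sum N h g)"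
  unfolding neg_lap_plus_sum_def by (rule periodicI) (simp_all add: periodic_shifts periodic_lap)

lemma cell_sum_neg_lap_plus_sum:
  "periodic N g \<Longrightarrow> cell_sum N (neg_lap_plus_sum N h g) = real N ^ 2 * cell_sum N g"
proof -
  assume g: "periodic N g"
  have "cell_sum N (neg_lap_plus_sum N h g) = - cell_sum N (lap h g) + cell_sum N (\<lambda>i j. cell_sum N g)"
    unfolding neg_lap_plus_sum_def by (simp only: cell_sum_add cell_sum_uminus)
  then show ?thesis by (simp add: cell_sum_lap[OF g] cell_sum_const)
qed

lemma neg_lap_plus_sum_eq_zero:
  assumes g: "periodic N g" and N: "N \<ge> 1" and h: "h \<noteq> 0"
    and K: "\<And>i j. neg_lap_plus_sum N h g i j = 0"
  shows "g i j = 0"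
proof -
  have "real N ^ 2 * cell_sum N g = 0"
    using cell_sum_neg_lap_plus_sum[OF g, of h] K by (simp add: cell_sum_def)
  then have sum0: "cell_sum N g = 0" using N by simp
  then have "lap h g i j = 0" for i j using K[of i j] by (simp add: neg_lap_plus_sum_def)
  then have const: "g i j = g 0 0" for i j by (rule lap_eq_zero_imp_const[OF g N h])
  then have "cell_sum N g = cell_sum N (\<lambda>i j. g 0 0)"
    by (intro arg_cong[where f="cell_sum N"] ext)
  then have "cell_sum N g = real N ^ 2 * g 0 0" by (simp add: cell_sum_const)
  then show ?thesis using sum0 N const[of i j] by simp
qed

definition cell_index :: "nat \<Rightarrow> int \<Rightarrow> int \<Rightarrow> nat" where
  "cell_index N i j = nat ((i - 1) mod int N) * N + nat ((j - 1) mod int N)"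
definition cell_x :: "nat \<Rightarrow> nat \<Rightarrow> int" where "cell_x N k = int (k div N) + 1"
definition cell_y :: "nat \<Rightarrow> nat \<Rightarrow> int" where "cell_y N k = int (k mod N) + 1"
definition grid_of_vec :: "nat \<Rightarrow> real vec \<Rightarrow> grid" where
  "grid_of_vec N v = (\<lambda>i j. v $ cell_index N i j)"

lemma cell_index_less:
  assumes "N \<ge> 1" shows "cell_index N i j < N * N"
proof -
  have a: "nat ((i - 1) mod int N) < N" and b: "nat ((j - 1) mod int N) < N"
    using assms by (simp_all add: nat_less_iff)
  then have "cell_index N i j < (nat ((i - 1) mod int N) + 1) * N"
    by (simp add: cell_index_def)
  also have "\<dots> \<le> N * N" using a by (intro mult_right_mono) auto
  finally show ?thesis .
qed

lemma cell_index_coords: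
  assumes "N \<ge> 1" "k < N * N" shows "cell_index N (cell_x N k) (cell_y N k) = k"
proof -
  have "k div N < N" using assms by (simp add: less_mult_imp_div_less)
  then show ?thesis using assms by (simp add: cell_index_def cell_x_def cell_y_def)
qed

lemma cell_coords_index:
  assumes "1 \<le> i" "i \<le> int N" "1 \<le> j" "j \<le> int N"
  shows "cell_x N (cell_index N i j) = i" "cell_y N (cell_index N i j) = j"
proof -
  have "(i - 1) mod int N = i - 1" "(j - 1) mod int N = j - 1" "nat (j - 1) < N" using assms by simp_all
  then show "cell_x N (cell_index N i j) = i" "cell_y N (cell_index N i j) = j"
    using assms by (simp_all add: cell_index_def cell_x_def cell_y_def)
qed

lemma periodic_grid_of_vec: "periodic N (grid_of_vec N v)"
proof -
  have mod_shift: "(k + int N - 1) mod int N = (k - 1) mod int N" for k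
    by (metis add.commute add_diff_eq mod_add_self2)
  show ?thesis
    unfolding grid_of_vec_def cell_index_def by (intro periodicI) (simp_all add: mod_shift)
qed

lemma grid_of_vec_unit_expansion:
  assumes "N \<ge> 1"
  shows "grid_of_vec N v = (\<lambda>i j. \<Sum>l\<in>{0..<N*N}. v $ l * grid_of_vec N (unit_vec (N*N) l) i j)"
proof (intro ext)
  fix i j
  have "cell_index N i j < N * N" by (rule cell_index_less[OF assms])
  then have "(\<Sum>l\<in>{0..<N*N}. v $ l * grid_of_vec N (unit_vec (N*N) l) i j)
      = (\<Sum>l\<in>{0..<N*N}. if l = cell_index N i j then v $ l else 0)"
    by (intro sum.cong) (auto simp: grid_of_vec_def)
  then show "grid_of_vec N v i j = (\<Sum>l\<in>{0..<N*N}. v $ l * grid_of_vec N (unit_vec (N*N) l) i j)"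
    using \<open>cell_index N i j < N * N\<close> by (simp add: grid_of_vec_def)
qed

definition neg_lap_plus_sum_mat :: "nat \<Rightarrow> real \<Rightarrow> real mat" where
  "neg_lap_plus_sum_mat N h = mat (N*N) (N*N)
     (\<lambda>(k, l). neg_lap_plus_sum N h (grid_of_vec N (unit_vec (N*N) l)) (cell_x N k) (cell_y N k))"

lemma neg_lap_plus_sum_mat_mult_vec:
  assumes N: "N \<ge> 1" and v: "v \<in> carrier_vec (N*N)" and k: "k < N*N"
  shows "(neg_lap_plus_sum_mat N h *\<^sub>v v) $ k = neg_lap_plus_sum N h (grid_of_vec N v) (cell_x N k) (cell_y N k)"
proof -
  have "(neg_lap_plus_sum_mat N h *\<^sub>v v) $ k
      = (\<Sum>l\<in>{0..<N*N}. v $ l * neg_lap_plus_sum N h (grid_of_vec N (unit_vec (N*N) l)) (cell_x N k) (cell_y N k))"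
    using v k by (auto simp: neg_lap_plus_sum_mat_def scalar_prod_def mult.commute intro!: sum.cong)
  also have "\<dots> = neg_lap_plus_sum N h (grid_of_vec N v) (cell_x N k) (cell_y N k)"
    by (subst grid_of_vec_unit_expansion[OF N]) (simp add: neg_lap_plus_sum_lincomb)
  finally show ?thesis .
qed

lemma neg_lap_plus_sum_surj:
  assumes N: "N \<ge> 1" and h: "h \<noteq> 0" and f: "periodic N f"
  obtains g where "periodic N g" "\<And>i j. neg_lap_plus_sum N h g i j = f i j"
proof -
  let ?n = "N * N" and ?K = "neg_lap_plus_sum_mat N h"
  have K: "?K \<in> carrier_mat ?n ?n" by (simp add: neg_lap_plus_sum_mat_def)
  have eq_on_cell: "neg_lap_plus_sum N h (grid_of_vec N v) i j = f' i j"
    if v: "v \<in> carrier_vec ?n" and f': "periodic N f'"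
      and Kv: "\<And>k. k < ?n \<Longrightarrow> (?K *\<^sub>v v) $ k = f' (cell_x N k) (cell_y N k)" for v f' i j
  proof -
    have "neg_lap_plus_sum N h (grid_of_vec N v) i j - f' i j = 0"
    proof (rule periodic_eq_zeroI[OF periodic_diff[OF periodic_neg_lap_plus_sum[OF periodic_grid_of_vec] f'] N])
      fix i j :: int assume ij: "1 \<le> i" "i \<le> int N" "1 \<le> j" "j \<le> int N"
      show "neg_lap_plus_sum N h (grid_of_vec N v) i j - f' i j = 0"
        using Kv[OF cell_index_less[OF N, of i j]] neg_lap_plus_sum_mat_mult_vec[OF N v cell_index_less[OF N, of i j]]
        by (simp add: cell_coords_index[OF ij])
    qed
    then show ?thesis by simp
  qed
  have "det ?K \<noteq> 0"
  proof
    assume "det ?K = 0"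
    then obtain v where v: "v \<in> carrier_vec ?n" "v \<noteq> 0\<^sub>v ?n" "?K *\<^sub>v v = 0\<^sub>v ?n"
      using det_0_iff_vec_prod_zero_field[OF K] by blast
    have "neg_lap_plus_sum N h (grid_of_vec N v) i j = 0" for i j
      using eq_on_cell[OF v(1) periodic_const] v(3) by simp
    then have "grid_of_vec N v i j = 0" for i j
      by (rule neg_lap_plus_sum_eq_zero[OF periodic_grid_of_vec N h])
    then have "v $ k = 0" if "k < ?n" for k
      using cell_index_coords[OF N that] by (metis grid_of_vec_def)
    with v(1,2) show False by (auto intro: eq_vecI)
  qed
  then obtain B where B: "B \<in> carrier_mat ?n ?n" "?K * B = 1\<^sub>m ?n"
    using det_non_zero_imp_unit[OF K] unfolding Units_def ring_mat_def by auto
  define b where "b = vec ?n (\<lambda>k. f (cell_x N k) (cell_y N k))"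
  have b: "b \<in> carrier_vec ?n" by (simp add: b_def)
  have Bb: "B *\<^sub>v b \<in> carrier_vec ?n" using B(1) b by simp
  have "?K *\<^sub>v (B *\<^sub>v b) = b"
    using assoc_mult_mat_vec[OF K B(1) b] B(2) b by simp
  then have "neg_lap_plus_sum N h (grid_of_vec N (B *\<^sub>v b)) i j = f i j" for i j
    by (intro eq_on_cell[OF Bb f]) (simp add: b_def)
  then show ?thesis using that periodic_grid_of_vec by blast
qed

lemma neg_lap_solvable:
  assumes N: "N \<ge> 1" and h: "h \<noteq> 0" and f: "periodic N f" and mean: "cell_sum N f = 0"
  obtains g where "periodic N g" "cell_sum N g = 0" "\<And>i j. - lap h g i j = f i j"
proof -
  obtain g where g: "periodic N g" and Kg: "\<And>i j. neg_lap_plus_sum N h g i j = f i j"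
    using neg_lap_plus_sum_surj[OF N h f] by blast
  have "real N ^ 2 * cell_sum N g = 0"
    using cell_sum_neg_lap_plus_sum[OF g, of h] Kg mean by (simp add: cell_sum_def)
  then have "cell_sum N g = 0" using N by simp
  then show ?thesis using that g Kg by (simp add: neg_lap_plus_sum_def)
qed

lemma gmean_linear:
  assumes "L > 0" "N \<ge> 1"
  shows gmean_diff: "gmean L N (\<lambda>i j. f i j - g i j) = gmean L N f - gmean L N g"
    and gmean_divide: "gmean L N (\<lambda>i j. f i j / c) = gmean L N f / c"
  using assms by (simp_all add: gmean_eq_cell_sum cell_sum_diff cell_sum_divide diff_divide_distrib)

lemma invlap_unique:
  assumes L: "L > 0" and N: "N \<ge> 1"
    and "periodic N \<psi>" "gmean L N \<psi> = 0" "\<And>i j. - lap (L / real N) \<psi> i j = f i j"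
    and "periodic N \<psi>'" "gmean L N \<psi>' = 0" "\<And>i j. - lap (L / real N) \<psi>' i j = f i j"
  shows "\<psi> = \<psi>'"
proof -
  let ?d = "\<lambda>i j. \<psi> i j - \<psi>' i j"
  have h: "L / real N \<noteq> 0" using L N by simp
  have "lap (L / real N) ?d i j = 0" for i j
    using assms(5,8)[of i j] by (simp add: lap_diff)
  then have const: "?d i j = ?d 0 0" for i j
    by (rule lap_eq_zero_imp_const[OF periodic_diff[OF assms(3,6)] N h])
  have "cell_sum N ?d = 0"
    using assms(4,7) L N by (simp add: gmean_eq_cell_sum cell_sum_diff)
  moreover have "cell_sum N ?d = cell_sum N (\<lambda>i j. ?d 0 0)"
    by (intro arg_cong[where f="cell_sum N"] ext const)
  ultimately have "?d 0 0 = 0" using N by (simp add: cell_sum_const)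
  then show ?thesis using const by (intro ext) (metis eq_iff_diff_eq_0)
qed

lemma invlap:
  assumes L: "L > 0" and N: "N \<ge> 1" and f: "periodic N f" and mean: "gmean L N f = 0"
  shows periodic_invlap: "periodic N (invlap L N f)"
    and gmean_invlap: "gmean L N (invlap L N f) = 0"
    and neg_lap_invlap: "- lap (L / real N) (invlap L N f) i j = f i j"
proof -
  let ?P = "\<lambda>\<psi>. periodic N \<psi> \<and> gmean L N \<psi> = 0 \<and> (\<forall>i j. - lap (L / real N) \<psi> i j = f i j)"
  have h: "L / real N \<noteq> 0" using L N by simp
  have "cell_sum N f = 0" using mean L N by (simp add: gmean_eq_cell_sum)
  then obtain g where "periodic N g" "cell_sum N g = 0" "\<And>i j. - lap (L / real N) g i j = f i j"
    using neg_lap_solvable[OF N h f] by blast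
  then have "?P g" using L N by (simp add: gmean_eq_cell_sum)
  moreover have "\<psi> = \<psi>'" if "?P \<psi>" "?P \<psi>'" for \<psi> \<psi>'
    using invlap_unique[OF L N] that by blast
  ultimately have "\<exists>!\<psi>. ?P \<psi>" by blast
  then have "?P (invlap L N f)"
    unfolding invlap_def by (rule theI')
  then show "periodic N (invlap L N f)" "gmean L N (invlap L N f) = 0"
    "- lap (L / real N) (invlap L N f) i j = f i j" by auto
qed

lemma invlap_divide:
  assumes L: "L > 0" and N: "N \<ge> 1" and f: "periodic N f" and mean: "gmean L N f = 0"
  shows "invlap L N (\<lambda>i j. f i j / c) = (\<lambda>i j. invlap L N f i j / c)"
proof -
  have fc: "periodic N (\<lambda>i j. f i j / c)" "gmean L N (\<lambda>i j. f i j / c) = 0"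
    using periodic_pointwise[OF f, of "\<lambda>x. x / c"] mean L N by (simp_all add: gmean_divide)
  show ?thesis
  proof (rule invlap_unique[OF L N])
    show "periodic N (invlap L N (\<lambda>i j. f i j / c))" by (rule periodic_invlap[OF L N fc])
    show "gmean L N (invlap L N (\<lambda>i j. f i j / c)) = 0" by (rule gmean_invlap[OF L N fc])
    show "- lap (L / real N) (invlap L N (\<lambda>i j. f i j / c)) i j = f i j / c" for i j
      by (rule neg_lap_invlap[OF L N fc])
    show "periodic N (\<lambda>i j. invlap L N f i j / c)"
      using periodic_pointwise[OF periodic_invlap[OF L N f mean], of "\<lambda>x. x / c"] .
    show "gmean L N (\<lambda>i j. invlap L N f i j / c) = 0"
      using gmean_invlap[OF L N f mean] L N by (simp add: gmean_divide)
    show "- lap (L / real N) (\<lambda>i j. invlap L N f i j / c) i j = f i j / c" for i j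
      using neg_lap_invlap[OF L N f mean, of i j] by (simp add: lap_divide minus_divide_left)
  qed
qed

lemma cell_sum_mult_eq_dirichlet_invlap:
  assumes L: "L > 0" and N: "N \<ge> 1" and f: "periodic N f" and mean: "gmean L N f = 0" and g: "periodic N g"
  shows "cell_sum N (\<lambda>i j. f i j * g i j) = dirichlet_form N (L / real N) (invlap L N f) g"
proof -
  have "f i j = - lap (L / real N) (invlap L N f) i j" for i j
    using neg_lap_invlap[OF L N f mean] by simp
  then have "cell_sum N (\<lambda>i j. f i j * g i j) = - cell_sum N (\<lambda>i j. lap (L / real N) (invlap L N f) i j * g i j)"
    unfolding cell_sum_uminus[symmetric] by simp
  then show ?thesis using cell_sum_lap_mult[OF periodic_invlap[OF L N f mean] g] by simp
qed

lemma hm1_norm_sq: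
  assumes L: "L > 0" and N: "N \<ge> 1" and f: "periodic N f" and mean: "gmean L N f = 0"
  shows "(hm1_norm L N f)^2 = (L / real N)^2 * dirichlet_form N (L / real N) (invlap L N f) (invlap L N f)"
proof -
  have "hm1_ip L N f f = (L / real N)^2 * dirichlet_form N (L / real N) (invlap L N f) (invlap L N f)"
    unfolding hm1_ip_def gip_eq_cell_sum
    by (simp add: cell_sum_mult_eq_dirichlet_invlap[OF L N f mean periodic_invlap[OF L N f mean]])
  then show ?thesis using dirichlet_form_nonneg by (simp add: hm1_norm_def)
qed

lemma hm1_norm_divide:
  assumes L: "L > 0" and N: "N \<ge> 1" and f: "periodic N f" and mean: "gmean L N f = 0"
  shows "hm1_norm L N (\<lambda>i j. f i j / c) = hm1_norm L N f / \<bar>c\<bar>"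
proof -
  have "hm1_ip L N (\<lambda>i j. f i j / c) (\<lambda>i j. f i j / c) = hm1_ip L N f f / c^2"
    unfolding hm1_ip_def invlap_divide[OF assms] gip_eq_cell_sum
    by (simp add: cell_sum_divide power2_eq_square)
  then show ?thesis by (simp add: hm1_norm_def real_sqrt_divide)
qed

lemma cell_sum_mult_eq_lap_invlap:
  assumes L: "L > 0" and N: "N \<ge> 1" and f: "periodic N f" and mean: "gmean L N f = 0" and g: "periodic N g"
  shows "cell_sum N (\<lambda>i j. f i j * g i j) = - cell_sum N (\<lambda>i j. lap (L / real N) g i j * invlap L N f i j)"
  using cell_sum_mult_eq_dirichlet_invlap[OF assms] cell_sum_lap_mult[OF g periodic_invlap[OF L N f mean]]
  by (simp add: dirichlet_form_sym)

text \<open>Interpolation between \<open>H\<^sup>-\<^sup>1\<close> and \<open>H\<^sup>1\<close>: \<open>\<parallel>f\<parallel>\<^sup>2 = \<langle>\<nabla>(-\<Delta>\<^sub>h)\<^sup>-\<^sup>1f, \<nabla>f\<rangle>\<close>, then Young's inequality.\<close>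

lemma cell_sum_sq_interpolation:
  assumes L: "L > 0" and N: "N \<ge> 1" and f: "periodic N f" and mean: "gmean L N f = 0"
    and a: "a \<ge> 0" and b: "b \<ge> 0" and C: "C^2 \<le> 4 * a * b"
  shows "C * cell_sum N (\<lambda>i j. f i j * f i j)
    \<le> a * dirichlet_form N (L / real N) (invlap L N f) (invlap L N f) + b * dirichlet_form N (L / real N) f f"
proof -
  let ?B = "dirichlet_form N (L / real N)" and ?P = "invlap L N f"
  have "\<bar>C\<bar> = sqrt (C^2)" by simp
  also have "\<dots> \<le> sqrt (4 * a * b)" using C by (rule real_sqrt_le_mono)
  also have "\<dots> = 2 * sqrt a * sqrt b" by (simp add: real_sqrt_mult)
  finally have "\<bar>C\<bar> \<le> 2 * sqrt a * sqrt b" .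
  moreover have "0 \<le> cell_sum N (\<lambda>i j. f i j * f i j)" by (rule cell_sum_nonneg) simp
  ultimately have "C * cell_sum N (\<lambda>i j. f i j * f i j) \<le> 2 * sqrt a * sqrt b * cell_sum N (\<lambda>i j. f i j * f i j)"
    by (smt (verit) mult_right_mono abs_ge_self)
  also have "\<dots> = 2 * sqrt a * sqrt b * ?B ?P f"
    by (simp add: cell_sum_mult_eq_dirichlet_invlap[OF L N f mean f])
  also have "\<dots> \<le> a * ?B ?P ?P + b * ?B f f"
    using dirichlet_form_young[of "sqrt a" "sqrt b" N "L / real N" ?P f] a b by simp
  finally show ?thesis .
qed

section \<open>Pointwise convexity inequalities\<close>

lemma mult_ln_tangent:
  fixes c x y :: real
  assumes "c > 0" "x > 0" "y > 0"
  shows "y * ln (c * y) - x * ln (c * x) \<le> (ln (c * y) + 1) * (y - x)"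
proof -
  have "ln (c * y) - ln (c * x) = ln (y / x)"
    using assms by (simp add: ln_div ln_mult)
  moreover have "x * ln (y / x) \<le> x * (y / x - 1)"
    using assms by (intro mult_left_mono ln_le_minus_one) auto
  moreover have "x * (y / x - 1) = y - x" using assms by (simp add: field_simps)
  ultimately show ?thesis by (simp add: algebra_simps)
qed

lemma Sfun_tangent:
  assumes M0: "M0 > 0" and N0: "N0 > 0"
    and "a > 0" "b > 0" "a + b < 1" "a' > 0" "b' > 0" "a' + b' < 1"
  shows "Sfun M0 N0 a' b' \<le> Sfun M0 N0 a b + dSa M0 N0 a' b' * (a' - a) + dSb M0 N0 a' b' * (b' - b)"
proof -
  have "sqrt (M0 / pi) + N0 / 2 > 0" using M0 N0 by (simp add: add_nonneg_pos)
  then have "alphaC M0 N0 > 0" unfolding alphaC_def by simp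
  moreover have "betaC M0 N0 > 0"
    using M0 N0 unfolding betaC_def by (simp add: add_nonneg_pos)
  ultimately have t:
    "a' * ln (alphaC M0 N0 * a' / M0) - a * ln (alphaC M0 N0 * a / M0) \<le> (ln (alphaC M0 N0 * a' / M0) + 1) * (a' - a)"
    "b' * ln (betaC M0 N0 * b' / N0) - b * ln (betaC M0 N0 * b / N0) \<le> (ln (betaC M0 N0 * b' / N0) + 1) * (b' - b)"
    "(1 - a' - b') * ln (1 - a' - b') - (1 - a - b) * ln (1 - a - b) \<le> (ln (1 - a' - b') + 1) * ((1 - a' - b') - (1 - a - b))"
    using mult_ln_tangent[of "alphaC M0 N0 / M0" a a'] mult_ln_tangent[of "betaC M0 N0 / N0" b b']
      mult_ln_tangent[of 1 "1 - a - b" "1 - a' - b'"] assms by auto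
  have "a' / M0 * ln (alphaC M0 N0 * a' / M0) - a / M0 * ln (alphaC M0 N0 * a / M0) \<le> (ln (alphaC M0 N0 * a' / M0) + 1) * (a' - a) / M0"
    "b' / N0 * ln (betaC M0 N0 * b' / N0) - b / N0 * ln (betaC M0 N0 * b / N0) \<le> (ln (betaC M0 N0 * b' / N0) + 1) * (b' - b) / N0"
    using divide_right_mono[OF t(1), of M0] divide_right_mono[OF t(2), of N0] M0 N0 by (simp_all add: diff_divide_distrib)
  then show ?thesis
    using t(3) unfolding Sfun_def dSa_def dSb_def by (simp add: algebra_simps add_divide_distrib diff_divide_distrib)
qed

lemma kappa_sq_tangent:
  fixes s s' p p' :: real
  assumes "s > 0" "s' > 0"
  shows "kappa s * p^2 + 2 * kappa s * p * (p' - p) + kappa' s * p^2 * (s' - s) \<le> kappa s' * p'^2"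
proof -
  have "2 * p * p' * s * s' - p^2 * s'^2 \<le> p'^2 * s^2"
    using zero_le_power2[of "p' * s - p * s'"] by (simp add: power2_eq_square algebra_simps)
  then have "(2 * p * p' * s * s' - p^2 * s'^2) / (36 * s^2 * s') \<le> p'^2 * s^2 / (36 * s^2 * s')"
    using assms by (intro divide_right_mono) auto
  moreover have "(2 * p * p' * s * s' - p^2 * s'^2) / (36 * s^2 * s')
      = kappa s * p^2 + 2 * kappa s * p * (p' - p) + kappa' s * p^2 * (s' - s)"
    using assms unfolding kappa_def kappa'_def by (simp add: field_simps power2_eq_square)
  moreover have "p'^2 * s^2 / (36 * s^2 * s') = kappa s' * p'^2"
    using assms unfolding kappa_def by (simp add: field_simps power2_eq_square)
  ultimately show ?thesis by simp
qed

text \<open>With \<open>d = \<chi>\<^sub>1\<^sub>2 - \<chi>\<^sub>1\<^sub>3 - \<chi>\<^sub>2\<^sub>3\<close> the gap between the two sides is a sum of squares with nonnegative weights;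
  the sign of \<open>d\<close> decides how the cross terms are completed.\<close>

lemma Hfun_extrapolation_bound:
  fixes c12 c13 c23 a0 a a' b0 b b' :: real
  assumes c: "c12 \<ge> 0" "c13 \<ge> 0" "c23 \<ge> 0"
  defines "C \<equiv> 3 * c13 + 3 * c23 + 2 * c12"
    and "K1 \<equiv> (2 * c12 + 3 * c13 + c23) / 2" and "K2 \<equiv> (2 * c12 + c13 + 3 * c23) / 2"
  shows "Hfun c12 c13 c23 a' b' + K1 * (a' - a)^2 + K2 * (b' - b)^2
    \<le> Hfun c12 c13 c23 a b + dHa c12 c13 c23 (2 * a - a0) (2 * b - b0) * (a' - a)
       + dHb c12 c13 c23 (2 * a - a0) (2 * b - b0) * (b' - b)
       + C * (a' - a)^2 + C * (b' - b)^2 + K1 * (a - a0)^2 + K2 * (b - b0)^2"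
proof -
  define d where "d = c12 - c13 - c23"
  define x1 where "x1 = a - a0"
  define x2 where "x2 = b - b0"
  define y1 where "y1 = a' - a"
  define y2 where "y2 = b' - b"
  have gap: "Hfun c12 c13 c23 a b + dHa c12 c13 c23 (2 * a - a0) (2 * b - b0) * (a' - a)
       + dHb c12 c13 c23 (2 * a - a0) (2 * b - b0) * (b' - b)
       + C * (a' - a)^2 + C * (b' - b)^2 + K1 * (a - a0)^2 + K2 * (b - b0)^2
     - (Hfun c12 c13 c23 a' b' + K1 * (a' - a)^2 + K2 * (b' - b)^2)
     = (C - K1 + c13) * y1^2 + (C - K2 + c23) * y2^2 + K1 * x1^2 + K2 * x2^2
       - d * y1 * y2 - 2 * c13 * x1 * y1 - 2 * c23 * x2 * y2 + d * (x1 * y2 + x2 * y1)"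
    unfolding x1_def x2_def y1_def y2_def d_def Hfun_def dHa_def dHb_def
    by (simp add: power2_eq_square algebra_simps)
  have "0 \<le> (C - K1 + c13) * y1^2 + (C - K2 + c23) * y2^2 + K1 * x1^2 + K2 * x2^2
       - d * y1 * y2 - 2 * c13 * x1 * y1 - 2 * c23 * x2 * y2 + d * (x1 * y2 + x2 * y1)"
  proof (cases "d \<ge> 0")
    case True
    have "(C - K1 + c13) * y1^2 + (C - K2 + c23) * y2^2 + K1 * x1^2 + K2 * x2^2
       - d * y1 * y2 - 2 * c13 * x1 * y1 - 2 * c23 * x2 * y2 + d * (x1 * y2 + x2 * y1)
      = c13 * (x1 - y1)^2 + c23 * (x2 - y2)^2 + d/2 * (x1 + y2)^2 + d/2 * (x2 + y1)^2 + d/2 * (y1 - y2)^2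
        + (c12/2 + c13 + c23) * (x1^2 + x2^2) + (5/2 * c13 + 7/2 * c23) * y1^2 + (7/2 * c13 + 5/2 * c23) * y2^2"
      unfolding C_def K1_def K2_def d_def by (simp add: power2_eq_square field_simps)
    then show ?thesis using True c by simp
  next
    case False
    have "(C - K1 + c13) * y1^2 + (C - K2 + c23) * y2^2 + K1 * x1^2 + K2 * x2^2
       - d * y1 * y2 - 2 * c13 * x1 * y1 - 2 * c23 * x2 * y2 + d * (x1 * y2 + x2 * y1)
      = c13 * (x1 - y1)^2 + c23 * (x2 - y2)^2 + (- d/2) * (x1 - y2)^2 + (- d/2) * (x2 - y1)^2 + (- d/2) * (y1 + y2)^2
        + 3/2 * c12 * (x1^2 + x2^2) + (2 * c12 + 1/2 * c13 + 3/2 * c23) * y1^2 + (2 * c12 + 3/2 * c13 + 1/2 * c23) * y2^2"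
      unfolding C_def K1_def K2_def d_def by (simp add: power2_eq_square field_simps)
    moreover have "0 \<le> c13 * (x1 - y1)^2 + c23 * (x2 - y2)^2 + (- d/2) * (x1 - y2)^2 + (- d/2) * (x2 - y1)^2
        + (- d/2) * (y1 + y2)^2 + 3/2 * c12 * (x1^2 + x2^2) + (2 * c12 + 1/2 * c13 + 3/2 * c23) * y1^2
        + (2 * c12 + 3/2 * c13 + 1/2 * c23) * y2^2"
      using False c by (intro add_nonneg_nonneg mult_nonneg_nonneg) auto
    ultimately show ?thesis by simp
  qed
  then show ?thesis using gap by linarith
qed

section \<open>Convex-concave structure of the discrete energy\<close>

lemma difference_ops_diff:
  shows Ax_diff: "Ax (\<lambda>i j. v i j - u i j) i j = Ax v i j - Ax u i j"
    and Ay_diff: "Ay (\<lambda>i j. v i j - u i j) i j = Ay v i j - Ay u i j"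
    and Dx_diff: "Dx h (\<lambda>i j. v i j - u i j) i j = Dx h v i j - Dx h u i j"
    and Dy_diff: "Dy h (\<lambda>i j. v i j - u i j) i j = Dy h v i j - Dy h u i j"
  unfolding Ax_def Ay_def Dx_def Dy_def by (simp_all add: diff_divide_distrib[symmetric] algebra_simps)

lemma grad_term_eq_cell_sum:
  assumes u: "periodic N u"
  shows "grad_term L N u = (L / real N)^2 * cell_sum N (\<lambda>i j.
           kappa (Ax u i j) * (Dx (L / real N) u i j)^2 + kappa (Ay u i j) * (Dy (L / real N) u i j)^2)"
proof -
  let ?h = "L / real N"
  define fx where "fx = (\<lambda>i j. kappa (Ax u i j) * (Dx ?h u i j)^2)"
  define fy where "fy = (\<lambda>i j. kappa (Ay u i j) * (Dy ?h u i j)^2)"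
  have "periodic N fx" "periodic N fy"
    unfolding fx_def fy_def
    using periodic_pointwise2[OF periodic_Ax[OF u] periodic_Dx[OF u], of "\<lambda>s p. kappa s * p^2"]
      periodic_pointwise2[OF periodic_Ay[OF u] periodic_Dy[OF u], of "\<lambda>s p. kappa s * p^2"] by simp_all
  then have "cell_sum N (\<lambda>i j. ax fx i j * 1) = cell_sum N fx" "cell_sum N (\<lambda>i j. ay fy i j * 1) = cell_sum N fy"
    using cell_sum_ax_mult[of N fx "\<lambda>i j. 1"] cell_sum_ay_mult[of N fy "\<lambda>i j. 1"]
    by (simp_all add: periodic_const Ax_def Ay_def)
  then show ?thesis
    unfolding grad_term_def gip_eq_cell_sum fx_def fy_def by (simp add: cell_sum_add)
qed

lemma cell_sum_Tk_mult:
  assumes u: "periodic N u" and w: "periodic N w"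
  shows "cell_sum N (\<lambda>i j. Tk h u i j * w i j) = cell_sum N (\<lambda>i j.
      kappa' (Ax u i j) * (Dx h u i j)^2 * Ax w i j + 2 * kappa (Ax u i j) * Dx h u i j * Dx h w i j
    + kappa' (Ay u i j) * (Dy h u i j)^2 * Ay w i j + 2 * kappa (Ay u i j) * Dy h u i j * Dy h w i j)"
proof -
  define F1 where "F1 = (\<lambda>i j. kappa' (Ax u i j) * (Dx h u i j)^2)"
  define F2 where "F2 = (\<lambda>i j. kappa (Ax u i j) * Dx h u i j)"
  define F3 where "F3 = (\<lambda>i j. kappa' (Ay u i j) * (Dy h u i j)^2)"
  define F4 where "F4 = (\<lambda>i j. kappa (Ay u i j) * Dy h u i j)"
  have x: "periodic N (\<lambda>i j. F (Ax u i j) (Dx h u i j))" and y: "periodic N (\<lambda>i j. F (Ay u i j) (Dy h u i j))" for F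
    by (rule periodic_pointwise2[OF periodic_Ax[OF u] periodic_Dx[OF u]]
        periodic_pointwise2[OF periodic_Ay[OF u] periodic_Dy[OF u]])+
  have p1: "periodic N F1" and p2: "periodic N F2" and p3: "periodic N F3" and p4: "periodic N F4"
    unfolding F1_def F2_def F3_def F4_def by (rule x y)+
  have "cell_sum N (\<lambda>i j. Tk h u i j * w i j)
      = cell_sum N (\<lambda>i j. ax F1 i j * w i j) - 2 * cell_sum N (\<lambda>i j. dx h F2 i j * w i j)
      + cell_sum N (\<lambda>i j. ay F3 i j * w i j) - 2 * cell_sum N (\<lambda>i j. dy h F4 i j * w i j)"
    unfolding Tk_def F1_def F2_def F3_def F4_def cell_sum_cmult[symmetric] cell_sum_add[symmetric]
      cell_sum_diff[symmetric]
    by (simp add: algebra_simps)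
  also have "\<dots> = cell_sum N (\<lambda>i j. F1 i j * Ax w i j) + 2 * cell_sum N (\<lambda>i j. F2 i j * Dx h w i j)
      + cell_sum N (\<lambda>i j. F3 i j * Ay w i j) + 2 * cell_sum N (\<lambda>i j. F4 i j * Dy h w i j)"
    using cell_sum_ax_mult[OF p1 w] cell_sum_dx_mult[OF p2 w] cell_sum_ay_mult[OF p3 w] cell_sum_dy_mult[OF p4 w]
    by simp
  finally show ?thesis
    unfolding F1_def F2_def F3_def F4_def cell_sum_cmult[symmetric] cell_sum_add[symmetric]
    by (simp add: algebra_simps)
qed

lemma grad_term_subgradient:
  assumes u: "periodic N u" and v: "periodic N v" and "\<And>i j. u i j > 0" "\<And>i j. v i j > 0"
  shows "grad_term L N u + gip L N (Tk (L / real N) u) (\<lambda>i j. v i j - u i j) \<le> grad_term L N v"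
proof -
  let ?h = "L / real N"
  have "kappa (Ax u i j) * (Dx ?h u i j)^2 + kappa' (Ax u i j) * (Dx ?h u i j)^2 * (Ax v i j - Ax u i j)
       + 2 * kappa (Ax u i j) * Dx ?h u i j * (Dx ?h v i j - Dx ?h u i j) \<le> kappa (Ax v i j) * (Dx ?h v i j)^2"
    "kappa (Ay u i j) * (Dy ?h u i j)^2 + kappa' (Ay u i j) * (Dy ?h u i j)^2 * (Ay v i j - Ay u i j)
       + 2 * kappa (Ay u i j) * Dy ?h u i j * (Dy ?h v i j - Dy ?h u i j) \<le> kappa (Ay v i j) * (Dy ?h v i j)^2"
    for i j
    using kappa_sq_tangent[of "Ax u i j" "Ax v i j" "Dx ?h u i j" "Dx ?h v i j"]
      kappa_sq_tangent[of "Ay u i j" "Ay v i j" "Dy ?h u i j" "Dy ?h v i j"] assms(3,4)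
    by (simp_all add: Ax_def Ay_def add_pos_pos algebra_simps)
  then have "cell_sum N (\<lambda>i j. kappa (Ax u i j) * (Dx ?h u i j)^2 + kappa (Ay u i j) * (Dy ?h u i j)^2)
      + cell_sum N (\<lambda>i j. Tk ?h u i j * (v i j - u i j))
      \<le> cell_sum N (\<lambda>i j. kappa (Ax v i j) * (Dx ?h v i j)^2 + kappa (Ay v i j) * (Dy ?h v i j)^2)"
    unfolding cell_sum_Tk_mult[OF u periodic_diff[OF v u]] cell_sum_add[symmetric]
      Ax_diff Ay_diff Dx_diff Dy_diff
    by (intro cell_sum_mono) (smt (verit))
  then show ?thesis
    unfolding grad_term_eq_cell_sum[OF u] grad_term_eq_cell_sum[OF v] gip_eq_cell_sum
    by (simp add: mult_left_mono flip: distrib_left)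
qed

lemma gip_linear:
  shows gip_add_left: "gip L N (\<lambda>i j. f i j + g i j) w = gip L N f w + gip L N g w"
    and gip_diff_left: "gip L N (\<lambda>i j. f i j - g i j) w = gip L N f w - gip L N g w"
    and gip_cmult_left: "gip L N (\<lambda>i j. c * f i j) w = c * gip L N f w"
    and gip_add_right: "gip L N w (\<lambda>i j. f i j + g i j) = gip L N w f + gip L N w g"
    and gip_uminus_right: "gip L N w (\<lambda>i j. - f i j) = - gip L N w f"
  unfolding gip_eq_cell_sum
  by (simp_all add: algebra_simps cell_sum_add cell_sum_diff cell_sum_cmult cell_sum_uminus)

definition Ghc :: "real \<Rightarrow> nat \<Rightarrow> real \<Rightarrow> real \<Rightarrow> real \<Rightarrow> real \<Rightarrow> real \<Rightarrow> grid \<Rightarrow> grid \<Rightarrow> real" where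
  "Ghc L N M0 N0 e1 e2 e3 \<phi>1 \<phi>2 =
     gip L N (\<lambda>i j. Sfun M0 N0 (\<phi>1 i j) (\<phi>2 i j)) (\<lambda>_ _. 1)
     + e1^2 * grad_term L N \<phi>1 + e2^2 * grad_term L N \<phi>2 + e3^2 * grad_term L N (u3 \<phi>1 \<phi>2)"

lemma Gh_eq_Ghc:
  "Gh L N M0 N0 e1 e2 e3 c12 c13 c23 \<phi>1 \<phi>2
     = Ghc L N M0 N0 e1 e2 e3 \<phi>1 \<phi>2 + gip L N (\<lambda>i j. Hfun c12 c13 c23 (\<phi>1 i j) (\<phi>2 i j)) (\<lambda>_ _. 1)"
  unfolding Gh_def Ghc_def gip_add_left by simp

lemma gibbs_u3: "gibbs N \<phi>1 \<phi>2 \<Longrightarrow> periodic N (u3 \<phi>1 \<phi>2) \<and> (\<forall>i j. u3 \<phi>1 \<phi>2 i j > 0)"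
  unfolding gibbs_def u3_def by (auto intro!: periodic_diff periodic_const simp: less_diff_eq add.commute)

lemma Ghc_subgradient:
  assumes M0: "M0 > 0" and N0: "N0 > 0" and u: "gibbs N u1 u2" and v: "gibbs N v1 v2"
  shows "Ghc L N M0 N0 e1 e2 e3 u1 u2 + gip L N (dGc1 L N M0 N0 e1 e3 u1 u2) (\<lambda>i j. v1 i j - u1 i j)
           + gip L N (dGc2 L N M0 N0 e2 e3 u1 u2) (\<lambda>i j. v2 i j - u2 i j)
         \<le> Ghc L N M0 N0 e1 e2 e3 v1 v2"
proof -
  let ?h = "L / real N"
  have entropy: "gip L N (\<lambda>i j. Sfun M0 N0 (u1 i j) (u2 i j)) (\<lambda>_ _. 1)
      + gip L N (\<lambda>i j. dSa M0 N0 (u1 i j) (u2 i j)) (\<lambda>i j. v1 i j - u1 i j)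
      + gip L N (\<lambda>i j. dSb M0 N0 (u1 i j) (u2 i j)) (\<lambda>i j. v2 i j - u2 i j)
      \<le> gip L N (\<lambda>i j. Sfun M0 N0 (v1 i j) (v2 i j)) (\<lambda>_ _. 1)"
    using Sfun_tangent[OF M0 N0] u v unfolding gibbs_def gip_eq_cell_sum
    by (simp add: algebra_simps mult_left_mono cell_sum_mono flip: distrib_left cell_sum_add)
  have grad:
    "grad_term L N u1 + gip L N (Tk ?h u1) (\<lambda>i j. v1 i j - u1 i j) \<le> grad_term L N v1"
    "grad_term L N u2 + gip L N (Tk ?h u2) (\<lambda>i j. v2 i j - u2 i j) \<le> grad_term L N v2"
    "grad_term L N (u3 u1 u2) + gip L N (Tk ?h (u3 u1 u2)) (\<lambda>i j. u3 v1 v2 i j - u3 u1 u2 i j)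
       \<le> grad_term L N (u3 v1 v2)"
    using u v gibbs_u3[OF u] gibbs_u3[OF v] unfolding gibbs_def
    by (auto intro!: grad_term_subgradient)
  have u3_diff: "(\<lambda>i j. u3 v1 v2 i j - u3 u1 u2 i j) = (\<lambda>i j. - (v1 i j - u1 i j) + - (v2 i j - u2 i j))"
    by (simp add: u3_def fun_eq_iff)
  have "gip L N (dGc1 L N M0 N0 e1 e3 u1 u2) (\<lambda>i j. v1 i j - u1 i j)
      + gip L N (dGc2 L N M0 N0 e2 e3 u1 u2) (\<lambda>i j. v2 i j - u2 i j)
      = gip L N (\<lambda>i j. dSa M0 N0 (u1 i j) (u2 i j)) (\<lambda>i j. v1 i j - u1 i j)
      + gip L N (\<lambda>i j. dSb M0 N0 (u1 i j) (u2 i j)) (\<lambda>i j. v2 i j - u2 i j)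
      + e1^2 * gip L N (Tk ?h u1) (\<lambda>i j. v1 i j - u1 i j) + e2^2 * gip L N (Tk ?h u2) (\<lambda>i j. v2 i j - u2 i j)
      + e3^2 * gip L N (Tk ?h (u3 u1 u2)) (\<lambda>i j. u3 v1 v2 i j - u3 u1 u2 i j)"
    unfolding dGc1_def dGc2_def u3_diff gip_add_left gip_diff_left gip_cmult_left gip_add_right gip_uminus_right
    by (simp add: algebra_simps)
  moreover have "e1^2 * (grad_term L N u1 + gip L N (Tk ?h u1) (\<lambda>i j. v1 i j - u1 i j)) \<le> e1^2 * grad_term L N v1"
    "e2^2 * (grad_term L N u2 + gip L N (Tk ?h u2) (\<lambda>i j. v2 i j - u2 i j)) \<le> e2^2 * grad_term L N v2"
    "e3^2 * (grad_term L N (u3 u1 u2) + gip L N (Tk ?h (u3 u1 u2)) (\<lambda>i j. u3 v1 v2 i j - u3 u1 u2 i j))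
       \<le> e3^2 * grad_term L N (u3 v1 v2)"
    using grad by (simp_all add: mult_left_mono)
  ultimately show ?thesis
    using entropy unfolding Ghc_def distrib_left by linarith
qed

lemma gip_Hfun_extrapolation_bound:
  assumes c: "c12 \<ge> 0" "c13 \<ge> 0" "c23 \<ge> 0"
  shows "gip L N (\<lambda>i j. Hfun c12 c13 c23 (an i j) (bn i j)) (\<lambda>_ _. 1)
      + (2 * c12 + 3 * c13 + c23) / 2 * (gnorm2 L N (\<lambda>i j. an i j - a i j))^2
      + (2 * c12 + c13 + 3 * c23) / 2 * (gnorm2 L N (\<lambda>i j. bn i j - b i j))^2
    \<le> gip L N (\<lambda>i j. Hfun c12 c13 c23 (a i j) (b i j)) (\<lambda>_ _. 1)
      + gip L N (\<lambda>i j. dHa c12 c13 c23 (2 * a i j - a0 i j) (2 * b i j - b0 i j)) (\<lambda>i j. an i j - a i j)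
      + gip L N (\<lambda>i j. dHb c12 c13 c23 (2 * a i j - a0 i j) (2 * b i j - b0 i j)) (\<lambda>i j. bn i j - b i j)
      + (3 * c13 + 3 * c23 + 2 * c12) * (gnorm2 L N (\<lambda>i j. an i j - a i j))^2
      + (3 * c13 + 3 * c23 + 2 * c12) * (gnorm2 L N (\<lambda>i j. bn i j - b i j))^2
      + (2 * c12 + 3 * c13 + c23) / 2 * (gnorm2 L N (\<lambda>i j. a i j - a0 i j))^2
      + (2 * c12 + c13 + 3 * c23) / 2 * (gnorm2 L N (\<lambda>i j. b i j - b0 i j))^2"
proof -
  define Hn where "Hn = cell_sum N (\<lambda>i j. Hfun c12 c13 c23 (an i j) (bn i j))"
  define Ho where "Ho = cell_sum N (\<lambda>i j. Hfun c12 c13 c23 (a i j) (b i j))"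
  define Ha where "Ha = cell_sum N (\<lambda>i j. dHa c12 c13 c23 (2 * a i j - a0 i j) (2 * b i j - b0 i j) * (an i j - a i j))"
  define Hb where "Hb = cell_sum N (\<lambda>i j. dHb c12 c13 c23 (2 * a i j - a0 i j) (2 * b i j - b0 i j) * (bn i j - b i j))"
  define X1 where "X1 = cell_sum N (\<lambda>i j. (an i j - a i j) * (an i j - a i j))"
  define X2 where "X2 = cell_sum N (\<lambda>i j. (bn i j - b i j) * (bn i j - b i j))"
  define Y1 where "Y1 = cell_sum N (\<lambda>i j. (a i j - a0 i j) * (a i j - a0 i j))"
  define Y2 where "Y2 = cell_sum N (\<lambda>i j. (b i j - b0 i j) * (b i j - b0 i j))"
  let ?C = "3 * c13 + 3 * c23 + 2 * c12"
    and ?K1 = "(2 * c12 + 3 * c13 + c23) / 2" and ?K2 = "(2 * c12 + c13 + 3 * c23) / 2"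
  have "Hn + ?K1 * X1 + ?K2 * X2 \<le> Ho + Ha + Hb + ?C * X1 + ?C * X2 + ?K1 * Y1 + ?K2 * Y2"
    unfolding Hn_def Ho_def Ha_def Hb_def X1_def X2_def Y1_def Y2_def cell_sum_cmult[symmetric] cell_sum_add[symmetric]
    using Hfun_extrapolation_bound[OF c] by (intro cell_sum_mono) (simp add: power2_eq_square)
  then have "(L / real N)^2 * (Hn + ?K1 * X1 + ?K2 * X2)
      \<le> (L / real N)^2 * (Ho + Ha + Hb + ?C * X1 + ?C * X2 + ?K1 * Y1 + ?K2 * Y2)"
    by (rule mult_left_mono) simp
  then show ?thesis
    unfolding gip_eq_cell_sum gnorm2_sq mult_1_right
      Hn_def[symmetric] Ho_def[symmetric] Ha_def[symmetric] Hb_def[symmetric]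
      X1_def[symmetric] X2_def[symmetric] Y1_def[symmetric] Y2_def[symmetric]
    by (simp add: algebra_simps)
qed

lemma Gh_step_bound:
  assumes M0: "M0 > 0" and N0: "N0 > 0" and c: "c12 \<ge> 0" "c13 \<ge> 0" "c23 \<ge> 0"
    and old: "gibbs N a b" and new: "gibbs N an bn"
  shows "Gh L N M0 N0 e1 e2 e3 c12 c13 c23 an bn
      + (2 * c12 + 3 * c13 + c23) / 2 * (gnorm2 L N (\<lambda>i j. an i j - a i j))^2
      + (2 * c12 + c13 + 3 * c23) / 2 * (gnorm2 L N (\<lambda>i j. bn i j - b i j))^2
    \<le> Gh L N M0 N0 e1 e2 e3 c12 c13 c23 a b
      + gip L N (\<lambda>i j. dGc1 L N M0 N0 e1 e3 an bn i j + dHa c12 c13 c23 (2 * a i j - a0 i j) (2 * b i j - b0 i j))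
          (\<lambda>i j. an i j - a i j)
      + gip L N (\<lambda>i j. dGc2 L N M0 N0 e2 e3 an bn i j + dHb c12 c13 c23 (2 * a i j - a0 i j) (2 * b i j - b0 i j))
          (\<lambda>i j. bn i j - b i j)
      + (3 * c13 + 3 * c23 + 2 * c12) * (gnorm2 L N (\<lambda>i j. an i j - a i j))^2
      + (3 * c13 + 3 * c23 + 2 * c12) * (gnorm2 L N (\<lambda>i j. bn i j - b i j))^2
      + (2 * c12 + 3 * c13 + c23) / 2 * (gnorm2 L N (\<lambda>i j. a i j - a0 i j))^2
      + (2 * c12 + c13 + 3 * c23) / 2 * (gnorm2 L N (\<lambda>i j. b i j - b0 i j))^2"
proof -
  have flip: "(\<lambda>i j. v i j - u i j) = (\<lambda>i j. - (u i j - v i j))" for u v :: grid by simp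
  have convex: "Ghc L N M0 N0 e1 e2 e3 an bn
      \<le> Ghc L N M0 N0 e1 e2 e3 a b + gip L N (dGc1 L N M0 N0 e1 e3 an bn) (\<lambda>i j. an i j - a i j)
        + gip L N (dGc2 L N M0 N0 e2 e3 an bn) (\<lambda>i j. bn i j - b i j)"
    using Ghc_subgradient[OF M0 N0 new old, of L e1 e2 e3]
    unfolding flip[of a an] flip[of b bn] gip_uminus_right by simp
  note concave = gip_Hfun_extrapolation_bound[OF c, of L N an bn a b a0 b0]
  show ?thesis
    using convex concave unfolding Gh_eq_Ghc gip_add_left by linarith
qed

section \<open>Energy stability of the scheme\<close>

text \<open>One species of the scheme: test the equation with \<open>(-\<Delta>\<^sub>h)\<^sup>-\<^sup>1\<close> of the increment.  The BDF2 history term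
  is absorbed by the \<open>H\<^sup>-\<^sup>1\<close> part of the modified energy, and the stabilisation \<open>A \<Delta>t\<close> pays for the
  \<open>L\<^sup>2\<close> term \<open>C \<parallel>\<psi>\<parallel>\<^sup>2\<close> via Young's inequality.\<close>

lemma bdf2_component_dissipation:
  fixes C :: real
  assumes L: "L > 0" and N: "N \<ge> 1" and dt: "dt > 0" and M: "M > 0" and A: "M * C^2 / 4 \<le> A"
    and p0: "periodic N p0" and p: "periodic N p" and pn: "periodic N pn" and \<mu>0: "periodic N \<mu>0"
    and mean: "gmean L N p0 = gmean L N p" "gmean L N p = gmean L N pn"
    and scheme: "\<And>i j. (3 * pn i j - 4 * p i j + p0 i j) / (2 * dt)
                   = M * lap (L / real N) (\<lambda>i j. \<mu>0 i j - A * dt * lap (L / real N) (\<lambda>i j. pn i j - p i j) i j) i j"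
  shows "gip L N \<mu>0 (\<lambda>i j. pn i j - p i j) + C * (gnorm2 L N (\<lambda>i j. pn i j - p i j))^2
           + dt / (4 * M) * (hm1_norm L N (\<lambda>i j. (pn i j - p i j) / dt))^2
         \<le> dt / (4 * M) * (hm1_norm L N (\<lambda>i j. (p i j - p0 i j) / dt))^2"
proof -
  let ?h = "L / real N" and ?B = "dirichlet_form N (L / real N)"
  define \<psi> where "\<psi> = (\<lambda>i j. pn i j - p i j)"
  define \<chi> where "\<chi> = (\<lambda>i j. p i j - p0 i j)"
  define \<mu> where "\<mu> = (\<lambda>i j. \<mu>0 i j - A * dt * lap ?h \<psi> i j)"
  define P where "P = invlap L N \<psi>"
  define X where "X = invlap L N \<chi>"
  define k where "k = 1 / (M * dt)"
  have \<psi>: "periodic N \<psi>" "gmean L N \<psi> = 0" and \<chi>: "periodic N \<chi>" "gmean L N \<chi> = 0"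
    unfolding \<psi>_def \<chi>_def using periodic_diff p0 p pn mean L N by (simp_all add: gmean_diff)
  have \<mu>: "periodic N \<mu>"
    unfolding \<mu>_def by (intro periodic_diff \<mu>0 periodic_pointwise[OF periodic_lap[OF \<psi>(1)]])
  have k: "k > 0" using M dt by (simp add: k_def)
  have "0 \<le> M * C^2 / 4" using M by simp
  then have A0: "A \<ge> 0" using A by linarith
  have lap_\<mu>: "lap ?h \<mu> i j = k / 2 * (3 * \<psi> i j - \<chi> i j)" for i j
    using scheme[of i j] M dt unfolding \<mu>_def \<psi>_def \<chi>_def k_def by (simp add: field_simps)
  have "cell_sum N (\<lambda>i j. \<psi> i j * \<mu> i j) = - cell_sum N (\<lambda>i j. k / 2 * (3 * (\<psi> i j * P i j) - \<chi> i j * P i j))"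
    unfolding P_def cell_sum_mult_eq_lap_invlap[OF L N \<psi> \<mu>] by (simp add: lap_\<mu> algebra_simps)
  also have "\<dots> = - k / 2 * (3 * ?B P P - ?B X P)"
    unfolding cell_sum_cmult cell_sum_diff P_def X_def
    by (simp add: cell_sum_mult_eq_dirichlet_invlap[OF L N \<psi>(1,2)] cell_sum_mult_eq_dirichlet_invlap[OF L N \<chi>(1,2)]
        periodic_invlap[OF L N \<psi>])
  finally have tested: "cell_sum N (\<lambda>i j. \<psi> i j * \<mu> i j) = - k / 2 * (3 * ?B P P - ?B X P)" .
  have stabilised: "cell_sum N (\<lambda>i j. \<psi> i j * \<mu> i j) = cell_sum N (\<lambda>i j. \<mu>0 i j * \<psi> i j) + A * dt * ?B \<psi> \<psi>"
    using cell_sum_lap_mult[OF \<psi>(1) \<psi>(1), of ?h]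
    unfolding \<mu>_def by (simp add: algebra_simps cell_sum_diff cell_sum_cmult)
  have history: "2 * ?B X P \<le> ?B X X + ?B P P"
    using dirichlet_form_young[of 1 1 N ?h X P] by simp
  have "C^2 \<le> 4 * k * (A * dt)"
    using A M dt by (simp add: k_def field_simps)
  from cell_sum_sq_interpolation[OF L N \<psi> _ _ this] k A0 dt
  have young: "C * cell_sum N (\<lambda>i j. \<psi> i j * \<psi> i j) \<le> k * ?B P P + A * dt * ?B \<psi> \<psi>"
    unfolding P_def by simp
  have "cell_sum N (\<lambda>i j. \<mu>0 i j * \<psi> i j) + C * cell_sum N (\<lambda>i j. \<psi> i j * \<psi> i j) + k / 4 * ?B P P
      \<le> k / 4 * ?B X X"
    using tested stabilised young mult_left_mono[OF history, of "k / 4"] k by (simp add: algebra_simps)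
  then have "?h^2 * (cell_sum N (\<lambda>i j. \<mu>0 i j * \<psi> i j) + C * cell_sum N (\<lambda>i j. \<psi> i j * \<psi> i j) + k / 4 * ?B P P)
      \<le> ?h^2 * (k / 4 * ?B X X)"
    by (rule mult_left_mono) simp
  then have energy: "?h^2 * cell_sum N (\<lambda>i j. \<mu>0 i j * \<psi> i j) + C * (?h^2 * cell_sum N (\<lambda>i j. \<psi> i j * \<psi> i j))
      + ?h^2 * (k / 4 * ?B P P) \<le> ?h^2 * (k / 4 * ?B X X)"
    by (simp add: algebra_simps)
  have hm1: "dt / (4 * M) * (hm1_norm L N (\<lambda>i j. f i j / dt))^2 = ?h^2 * (k / 4 * ?B (invlap L N f) (invlap L N f))"
    if "periodic N f" "gmean L N f = 0" for f
    using dt M unfolding hm1_norm_divide[OF L N that] power_divide hm1_norm_sq[OF L N that] k_def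
    by (simp add: field_simps power2_eq_square)
  show ?thesis
    using energy[unfolded \<psi>_def] hm1[OF \<psi>] hm1[OF \<chi>] unfolding gip_eq_cell_sum gnorm2_sq P_def X_def \<psi>_def \<chi>_def
    by linarith
qed

lemma bdf2_stepD:
  assumes "bdf2_step L N M0 N0 e1 e2 e3 c12 c13 c23 Mob1 Mob2 dt A1 A2 p1o p1 p1n p2o p2 p2n"
  shows "\<And>i j. (3 * p1n i j - 4 * p1 i j + p1o i j) / (2 * dt) = Mob1 * lap (L / real N) (\<lambda>i j.
           dGc1 L N M0 N0 e1 e3 p1n p2n i j + dHa c12 c13 c23 (2 * p1 i j - p1o i j) (2 * p2 i j - p2o i j)
           - A1 * dt * lap (L / real N) (\<lambda>i j. p1n i j - p1 i j) i j) i j"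
    and "\<And>i j. (3 * p2n i j - 4 * p2 i j + p2o i j) / (2 * dt) = Mob2 * lap (L / real N) (\<lambda>i j.
           dGc2 L N M0 N0 e2 e3 p1n p2n i j + dHb c12 c13 c23 (2 * p1 i j - p1o i j) (2 * p2 i j - p2o i j)
           - A2 * dt * lap (L / real N) (\<lambda>i j. p2n i j - p2 i j) i j) i j"
  using assms unfolding bdf2_step_def Let_def by blast+

lemma periodic_bdf2_potentials:
  assumes "gibbs N a0 b0" "gibbs N a b" "gibbs N an bn"
  shows "periodic N (\<lambda>i j. dGc1 L N M0 N0 e1 e3 an bn i j + dHa c12 c13 c23 (2 * a i j - a0 i j) (2 * b i j - b0 i j))"
    and "periodic N (\<lambda>i j. dGc2 L N M0 N0 e2 e3 an bn i j + dHb c12 c13 c23 (2 * a i j - a0 i j) (2 * b i j - b0 i j))"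
proof -
  have p: "periodic N a0" "periodic N b0" "periodic N a" "periodic N b" "periodic N an" "periodic N bn"
    using assms unfolding gibbs_def by auto
  have Tk: "periodic N (Tk h an)" "periodic N (Tk h bn)" "periodic N (Tk h (u3 an bn))" for h
    using periodic_Tk p(5,6) gibbs_u3[OF assms(3)] by auto
  show "periodic N (\<lambda>i j. dGc1 L N M0 N0 e1 e3 an bn i j + dHa c12 c13 c23 (2 * a i j - a0 i j) (2 * b i j - b0 i j))"
    "periodic N (\<lambda>i j. dGc2 L N M0 N0 e2 e3 an bn i j + dHb c12 c13 c23 (2 * a i j - a0 i j) (2 * b i j - b0 i j))"
    unfolding dGc1_def dGc2_def
    by (rule periodicI; simp add: periodic_shifts[OF p(1)] periodic_shifts[OF p(2)] periodic_shifts[OF p(3)]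
        periodic_shifts[OF p(4)] periodic_shifts[OF p(5)] periodic_shifts[OF p(6)] periodic_shifts[OF Tk(1)]
        periodic_shifts[OF Tk(2)] periodic_shifts[OF Tk(3)])+
qed

theorem theorem4p1:
  fixes L dt M0 N0 e1 e2 e3 c12 c13 c23 Mob1 Mob2 A1 A2 :: real
    and N n :: nat
    and \<phi>1 \<phi>2 :: "nat \<Rightarrow> grid"
  assumes "L > 0" and "N \<ge> 1" and "n \<ge> 1" and "dt > 0"
    and "M0 > 0" and "N0 > 0"
    and "e1 > 0" and "e2 > 0" and "e3 > 0"
    and "c12 > 0" and "c13 > 0" and "c23 > 0"
    and "4 * c13 * c23 - (c12 - c13 - c23)^2 > 0"
    and "Mob1 > 0" and "Mob2 > 0"
    and "A1 \<ge> Mob1 * (3 * c13 + 3 * c23 + 2 * c12)^2 / 4"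
    and "A2 \<ge> Mob2 * (3 * c13 + 3 * c23 + 2 * c12)^2 / 4"
    and "\<forall>k \<in> {n-1, n, n+1}. gibbs N (\<phi>1 k) (\<phi>2 k)"
    and "gmean L N (\<phi>1 (n-1)) = gmean L N (\<phi>1 n)" and "gmean L N (\<phi>1 n) = gmean L N (\<phi>1 (n+1))"
    and "gmean L N (\<phi>2 (n-1)) = gmean L N (\<phi>2 n)" and "gmean L N (\<phi>2 n) = gmean L N (\<phi>2 (n+1))"
    and "bdf2_step L N M0 N0 e1 e2 e3 c12 c13 c23 Mob1 Mob2 dt A1 A2
           (\<phi>1 (n-1)) (\<phi>1 n) (\<phi>1 (n+1)) (\<phi>2 (n-1)) (\<phi>2 n) (\<phi>2 (n+1))"
  shows "Eh L N M0 N0 e1 e2 e3 c12 c13 c23 Mob1 Mob2 dt (\<phi>1 n) (\<phi>1 (n+1)) (\<phi>2 n) (\<phi>2 (n+1))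
         \<le> Eh L N M0 N0 e1 e2 e3 c12 c13 c23 Mob1 Mob2 dt (\<phi>1 (n-1)) (\<phi>1 n) (\<phi>2 (n-1)) (\<phi>2 n)"
proof -
  have gibbs: "gibbs N (\<phi>1 (n-1)) (\<phi>2 (n-1))" "gibbs N (\<phi>1 n) (\<phi>2 n)" "gibbs N (\<phi>1 (n+1)) (\<phi>2 (n+1))"
    using assms(18) by auto
  then have periodic: "periodic N (\<phi>1 (n-1))" "periodic N (\<phi>1 n)" "periodic N (\<phi>1 (n+1))"
    "periodic N (\<phi>2 (n-1))" "periodic N (\<phi>2 n)" "periodic N (\<phi>2 (n+1))"
    unfolding gibbs_def by auto
  note scheme = bdf2_stepD[OF assms(23)]
  note potential = periodic_bdf2_potentials[OF gibbs]
  note dissipation =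
    bdf2_component_dissipation[OF assms(1,2,4,14,16) periodic(1-3) potential(1) assms(19,20) scheme(1)]
    bdf2_component_dissipation[OF assms(1,2,4,15,17) periodic(4-6) potential(2) assms(21,22) scheme(2)]
  note energy = Gh_step_bound[OF assms(5,6) assms(10-12)[THEN less_imp_le] gibbs(2,3),
      of L e1 e2 e3 "\<phi>1 (n-1)" "\<phi>2 (n-1)"]
  from dissipation energy show ?thesis
    unfolding Eh_def by linarith
qed

end
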